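(* Let $X_V=\{(x,0):x\in\mathbb Z_s\}\cup\{(0,\tfrac1{n+1}):n\in\mathbb Z_{\ge0}\}\subseteq\mathbb Z_s\times[0,1]$, and identify $C(X_V)$ with the C$^*$-algebra of pairs $F=(f,(x_n)_{n\ge0})$ with $f\in C(\mathbb Z_s)$, $x_n\in\mathbb C$ and $\lim_{n\to\infty}x_n=f(0)$. Then the map $$T_V(F)=\sum_{n=0}^\infty (x_n-f(0))P_{(n,0)}+M_f$$ is an isomorphism of C$^*$-algebras from $C(X_V)$ onto $B_V=C^*(M_f,P_{(n,0)}:f\in C(\mathbb Z_s),n\ge0)=A_{V,\mathrm{inv}}$.
   Context: Fix an integer $s\ge2$; $\mathbb Z_s$ is the compact ring of $s$-adic integers, containing $\mathbb Z_{\ge0}$ densely. Let $\mathcal V=\{(n,x): n\in\mathbb Z_{\ge0},\ x\in\mathbb Z,\ 0\le x<s^n\}$, $H=\ell^2(\mathcal V)$ with orthonormal basis $\{E_{(n,x)}\}$, $M_fE_{(n,x)}=f(x)E_{(n,x)}$. The Hensel shift is $VE_{(n,x)}=E_{(n+1,sx)}$, $A_V=C^*(V,M_f: f\in C(\mathbb Z_s))$. $P_{(n,0)}$ denotes the orthogonal projection onto $\mathbb C E_{(n,0)}$ (equivalently $V^nP_{(0,0)}(V^* )^n$). $A_{V,\mathrm{inv}}$ is the fixed-point algebra in $A_V$ of the gauge action $\rho_\theta(a)=\mathcal U_\theta a\,\mathcal U_\theta^{-1}$, $\mathcal U_\theta E_{(n,x)}=e^{2\pi in\theta}E_{(n,x)}$.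 *)

theory Defs
  imports "HOL-Analysis.Analysis"
begin

text \<open>Z_s is represented by its digit expansions: sequences a :: nat => nat with a k < s,
  topologised as a subspace of the product topology on nat => nat (nat discrete).\<close>

definition Zs :: "nat \<Rightarrow> (nat \<Rightarrow> nat) set" where
  "Zs s = {a. \<forall>k. a k < s}"

definition sdigits :: "nat \<Rightarrow> nat \<Rightarrow> (nat \<Rightarrow> nat)" where
  "sdigits s x = (\<lambda>k. (x div s ^ k) mod s)"

text \<open>C(Z_s): continuous complex functions on Z_s (normalised to 0 off Z_s, so that
  each element of C(Z_s) has exactly one representative).\<close>
definition CZs :: "nat \<Rightarrow> ((nat \<Rightarrow> nat) \<Rightarrow> complex) set" where
  "CZs s = {f. continuous_on (Zs s) f \<and> (\<forall>a. a \<notin> Zs s \<longrightarrow> f a = 0)}"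

definition CXV :: "nat \<Rightarrow> (((nat \<Rightarrow> nat) \<Rightarrow> complex) \<times> (nat \<Rightarrow> complex)) set" where
  "CXV s = {(f, x). f \<in> CZs s \<and> x \<longlonglongrightarrow> f (sdigits s 0)}"

definition Vset :: "nat \<Rightarrow> (nat \<times> nat) set" where
  "Vset s = {(n, x). x < s ^ n}"

type_synonym mat = "nat \<times> nat \<Rightarrow> nat \<times> nat \<Rightarrow> complex"

text \<open>A matrix T (entries T v w = <E_v, T E_w>) defines a bounded operator on l^2(V)
  iff its bilinear form on finitely supported vectors is bounded.\<close>
definition mbound :: "mat \<Rightarrow> real \<Rightarrow> bool" where
  "mbound T C \<longleftrightarrow> (\<forall>A B (\<eta>::nat\<times>nat \<Rightarrow> complex) (\<xi>::nat\<times>nat \<Rightarrow> complex).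
      finite A \<longrightarrow> finite B \<longrightarrow>
      cmod (\<Sum>v\<in>A. \<Sum>w\<in>B. cnj (\<eta> v) * T v w * \<xi> w)
        \<le> C * sqrt (\<Sum>v\<in>A. (cmod (\<eta> v))\<^sup>2) * sqrt (\<Sum>w\<in>B. (cmod (\<xi> w))\<^sup>2))"

definition bop :: "nat \<Rightarrow> mat set" where
  "bop s = {T. (\<exists>C. mbound T C) \<and> (\<forall>v w. (v, w) \<notin> Vset s \<times> Vset s \<longrightarrow> T v w = 0)}"

definition opnorm :: "mat \<Rightarrow> real" where
  "opnorm T = Inf {C. C \<ge> 0 \<and> mbound T C}"

definition madd :: "mat \<Rightarrow> mat \<Rightarrow> mat" where
  "madd S T = (\<lambda>v w. S v w + T v w)"

definition mdiff :: "mat \<Rightarrow> mat \<Rightarrow> mat" where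
  "mdiff S T = (\<lambda>v w. S v w - T v w)"

definition mscale :: "complex \<Rightarrow> mat \<Rightarrow> mat" where
  "mscale c T = (\<lambda>v w. c * T v w)"

definition mzero :: mat where
  "mzero = (\<lambda>v w. 0)"

definition mmult :: "mat \<Rightarrow> mat \<Rightarrow> mat" where
  "mmult S T = (\<lambda>v w. \<Sum>\<^sub>\<infinity>u\<in>UNIV. S v u * T u w)"

definition madj :: "mat \<Rightarrow> mat" where
  "madj T = (\<lambda>v w. cnj (T w v))"

definition cstar_closed :: "nat \<Rightarrow> mat set \<Rightarrow> bool" where
  "cstar_closed s A \<longleftrightarrow> A \<subseteq> bop s \<and> mzero \<in> A
     \<and> (\<forall>S\<in>A. \<forall>T\<in>A. madd S T \<in> A \<and> mmult S T \<in> A)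
     \<and> (\<forall>c. \<forall>T\<in>A. mscale c T \<in> A)
     \<and> (\<forall>T\<in>A. madj T \<in> A)
     \<and> (\<forall>X T. (\<forall>k. X k \<in> A) \<longrightarrow> T \<in> bop s
            \<longrightarrow> (\<lambda>k. opnorm (mdiff (X k) T)) \<longlonglongrightarrow> 0 \<longrightarrow> T \<in> A)"

definition cstar_gen :: "nat \<Rightarrow> mat set \<Rightarrow> mat set" where
  "cstar_gen s G = \<Inter>{A. cstar_closed s A \<and> G \<subseteq> A}"

definition Mop :: "nat \<Rightarrow> ((nat \<Rightarrow> nat) \<Rightarrow> complex) \<Rightarrow> mat" where
  "Mop s f = (\<lambda>v w. if v = w \<and> v \<in> Vset s then f (sdigits s (snd v)) else 0)"

definition Vshift :: "nat \<Rightarrow> mat" where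
  "Vshift s = (\<lambda>v w. if w \<in> Vset s \<and> v = (Suc (fst w), s * snd w) then 1 else 0)"

definition Pn :: "nat \<Rightarrow> nat \<Rightarrow> mat" where
  "Pn s n = (\<lambda>v w. if v = (n, 0) \<and> w = (n, 0) then 1 else 0)"

definition Ugauge :: "nat \<Rightarrow> real \<Rightarrow> mat" where
  "Ugauge s \<theta> = (\<lambda>v w. if v = w \<and> v \<in> Vset s
                        then exp (2 * pi * \<i> * of_nat (fst v) * of_real \<theta>) else 0)"

text \<open>rho_theta(a) = U_theta a U_theta^{-1}, with U_theta^{-1} = U_{-theta}.\<close>
definition rho :: "nat \<Rightarrow> real \<Rightarrow> mat \<Rightarrow> mat" where
  "rho s \<theta> a = mmult (mmult (Ugauge s \<theta>) a) (Ugauge s (- \<theta>))"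

definition AV :: "nat \<Rightarrow> mat set" where
  "AV s = cstar_gen s ({Vshift s} \<union> Mop s ` CZs s)"

definition AVinv :: "nat \<Rightarrow> mat set" where
  "AVinv s = {a \<in> AV s. \<forall>\<theta>. rho s \<theta> a = a}"

definition BV :: "nat \<Rightarrow> mat set" where
  "BV s = cstar_gen s (Mop s ` CZs s \<union> range (Pn s))"

text \<open>T_V(F) = sum_n (x_n - f(0)) P_(n,0) + M_f  (series taken entrywise; its
  operator-norm convergence is part of the theorem).\<close>
definition TV :: "nat \<Rightarrow> ((nat \<Rightarrow> nat) \<Rightarrow> complex) \<times> (nat \<Rightarrow> complex) \<Rightarrow> mat" where
  "TV s F = (case F of (f, x) \<Rightarrow>
     madd (\<lambda>v w. \<Sum>n. mscale (x n - f (sdigits s 0)) (Pn s n) v w) (Mop s f))"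

end

theory Submission
  imports Defs
begin

text \<open>
  Every \<open>T\<^sub>V(F)\<close> is diagonal, with entry \<open>x\<^sub>n\<close> at \<open>E\<^sub>(\<^sub>n\<^sub>,\<^sub>0\<^sub>)\<close> and \<open>f(x)\<close> at \<open>E\<^sub>(\<^sub>n\<^sub>,\<^sub>x\<^sub>)\<close> for
  \<open>x > 0\<close>; hence \<open>T\<^sub>V\<close> is a \<open>*\<close>-homomorphism, and it is injective because the positive integers
  are dense in \<open>\<int>\<^sub>s\<close>. The norm dominates every entry, so the diagonal of a norm limit of
  operators \<open>T\<^sub>V(F\<^sub>k)\<close> is a uniform limit of continuous data and the image of \<open>T\<^sub>V\<close> is a
  \<open>C\<^sup>*\<close>-algebra; it contains \<open>M\<^sub>f\<close> and \<open>P\<^sub>(\<^sub>n\<^sub>,\<^sub>0\<^sub>)\<close> and lies in \<open>B\<^sub>V\<close>, so it equals \<open>B\<^sub>V\<close>.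

  For \<open>B\<^sub>V = A\<^sub>V\<^sub>,\<^sub>i\<^sub>n\<^sub>v\<close>: \<open>P\<^sub>(\<^sub>0\<^sub>,\<^sub>0\<^sub>) = M\<^sub>\<chi> - V V\<^sup>*\<close> and \<open>P\<^sub>(\<^sub>n\<^sub>+\<^sub>1\<^sub>,\<^sub>0\<^sub>) = V P\<^sub>(\<^sub>n\<^sub>,\<^sub>0\<^sub>) V\<^sup>*\<close>, and diagonal
  operators are gauge invariant. Conversely, \<open>A\<^sub>V\<close> lies in the norm closure of the finite sums of
  weighted shifts \<open>V\<^sup>k M\<^sub>d\<close> and \<open>M\<^sub>d V\<^sup>*\<^sup>k\<close> with \<open>d\<close> a diagonal from the image of \<open>T\<^sub>V\<close>. The gauge
  action multiplies the \<open>(v, w)\<close>-entry by \<open>exp (2\<pi>i\<theta>(n - m))\<close>, where \<open>n\<close>, \<open>m\<close> are the levels of \<open>v\<close>, \<open>w\<close>,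
  so an invariant element equals its level-preserving part, which is a norm limit of the
  level-preserving parts of such sums; these are the \<open>k = 0\<close> terms and lie in the image of \<open>T\<^sub>V\<close>.
\<close>

section \<open>Bounded matrices\<close>

lemma Cauchy_Schwarz_sum_sqrt:
  fixes a b :: "'a \<Rightarrow> real"
  shows "(\<Sum>i\<in>I. a i * b i) \<le> sqrt (\<Sum>i\<in>I. (a i)\<^sup>2) * sqrt (\<Sum>i\<in>I. (b i)\<^sup>2)"
proof -
  have "(\<Sum>i\<in>I. a i * b i)\<^sup>2 \<le> (\<Sum>i\<in>I. (a i)\<^sup>2) * (\<Sum>i\<in>I. (b i)\<^sup>2)"
    by (rule Cauchy_Schwarz_ineq_sum)
  then have "sqrt ((\<Sum>i\<in>I. a i * b i)\<^sup>2) \<le> sqrt ((\<Sum>i\<in>I. (a i)\<^sup>2) * (\<Sum>i\<in>I. (b i)\<^sup>2))"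
    using real_sqrt_le_mono by blast
  then show ?thesis by (simp add: real_sqrt_mult)
qed

lemma mbound_mono: "mbound T C \<Longrightarrow> C \<le> D \<Longrightarrow> mbound T D"
  unfolding mbound_def
  by (meson order_trans mult_right_mono real_sqrt_ge_zero sum_nonneg zero_le_power2
      mult_nonneg_nonneg)

lemma mbound_norm_entry:
  assumes "mbound T C" shows "cmod (T v w) \<le> C"
  using assms unfolding mbound_def
  by (erule_tac x="{v}" in allE, erule_tac x="{w}" in allE,
      erule_tac x="\<lambda>_. 1" in allE, erule_tac x="\<lambda>_. 1" in allE) simp

lemma bop_obtain_mbound:
  assumes "T \<in> bop s" obtains C where "C \<ge> 0" "mbound T C"
proof -
  obtain C where "mbound T C" using assms unfolding bop_def by blast
  then show thesis using that[of "\<bar>C\<bar>"] mbound_mono by simp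
qed

lemma bopI: "mbound T C \<Longrightarrow> (\<And>v w. v \<notin> Vset s \<Longrightarrow> T v w = 0)
   \<Longrightarrow> (\<And>v w. w \<notin> Vset s \<Longrightarrow> T v w = 0) \<Longrightarrow> T \<in> bop s"
  unfolding bop_def by blast

lemma bop_row_outside: "T \<in> bop s \<Longrightarrow> v \<notin> Vset s \<Longrightarrow> T v w = 0"
  unfolding bop_def by blast

lemma bop_column_outside: "T \<in> bop s \<Longrightarrow> w \<notin> Vset s \<Longrightarrow> T v w = 0"
  unfolding bop_def by blast

lemma opnorm_le: "mbound T C \<Longrightarrow> 0 \<le> C \<Longrightarrow> opnorm T \<le> C"
  unfolding opnorm_def by (rule cInf_lower) (auto intro: bdd_belowI[where m=0])

lemma opnorm_nonneg: "mbound T C \<Longrightarrow> 0 \<le> opnorm T"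
  unfolding opnorm_def using mbound_mono[of T C "\<bar>C\<bar>"] by (intro cInf_greatest) force+

lemma opnorm_nonneg_bop: "T \<in> bop s \<Longrightarrow> 0 \<le> opnorm T"
  by (metis bop_obtain_mbound opnorm_nonneg)

lemma mbound_opnorm:
  assumes "T \<in> bop s" shows "mbound T (opnorm T)"
  unfolding mbound_def
proof (intro allI impI)
  fix A B :: "(nat\<times>nat) set" and \<eta> \<xi> :: "nat\<times>nat \<Rightarrow> complex"
  assume fin: "finite A" "finite B"
  define L where "L = cmod (\<Sum>v\<in>A. \<Sum>w\<in>B. cnj (\<eta> v) * T v w * \<xi> w)"
  define K where "K = sqrt (\<Sum>v\<in>A. (cmod (\<eta> v))\<^sup>2) * sqrt (\<Sum>w\<in>B. (cmod (\<xi> w))\<^sup>2)"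
  have K0: "K \<ge> 0" unfolding K_def by (simp add: sum_nonneg)
  have LC: "L \<le> C * K" if "mbound T C" for C
    using that fin unfolding mbound_def L_def K_def by (simp add: mult.assoc)
  obtain C0 where C0: "C0 \<ge> 0" "mbound T C0" using bop_obtain_mbound assms by blast
  have "L \<le> opnorm T * K"
  proof (cases "K = 0")
    case True then show ?thesis using LC[OF C0(2)] by simp
  next
    case False
    then have "K > 0" using K0 by simp
    then have "L / K \<le> opnorm T" unfolding opnorm_def
      using C0 LC by (intro cInf_greatest) (auto simp: divide_le_eq mult.commute)
    then show ?thesis using \<open>K > 0\<close> by (simp add: divide_le_eq)
  qed
  then show "cmod (\<Sum>v\<in>A. \<Sum>w\<in>B. cnj (\<eta> v) * T v w * \<xi> w)
      \<le> opnorm T * sqrt (\<Sum>v\<in>A. (cmod (\<eta> v))\<^sup>2) * sqrt (\<Sum>w\<in>B. (cmod (\<xi> w))\<^sup>2)"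
    unfolding L_def K_def by (simp add: mult.assoc)
qed

lemma norm_entry_le_opnorm: "T \<in> bop s \<Longrightarrow> cmod (T v w) \<le> opnorm T"
  using mbound_opnorm mbound_norm_entry by blast

lemma mbound_zero: "mbound mzero 0"
  unfolding mbound_def mzero_def by simp

lemma mbound_add:
  assumes "mbound S C" "mbound T D" shows "mbound (madd S T) (C + D)"
  unfolding mbound_def madd_def
proof (intro allI impI)
  fix A B :: "(nat\<times>nat) set" and \<eta> \<xi> :: "nat\<times>nat \<Rightarrow> complex"
  assume fin: "finite A" "finite B"
  let ?a = "sqrt (\<Sum>v\<in>A. (cmod (\<eta> v))\<^sup>2)" and ?b = "sqrt (\<Sum>w\<in>B. (cmod (\<xi> w))\<^sup>2)"
  have "(\<Sum>v\<in>A. \<Sum>w\<in>B. cnj (\<eta> v) * (S v w + T v w) * \<xi> w)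
     = (\<Sum>v\<in>A. \<Sum>w\<in>B. cnj (\<eta> v) * S v w * \<xi> w) + (\<Sum>v\<in>A. \<Sum>w\<in>B. cnj (\<eta> v) * T v w * \<xi> w)"
    by (simp add: algebra_simps sum.distrib)
  also have "cmod \<dots> \<le> C * ?a * ?b + D * ?a * ?b"
    using assms fin unfolding mbound_def by (meson add_mono norm_triangle_le)
  finally show "cmod (\<Sum>v\<in>A. \<Sum>w\<in>B. cnj (\<eta> v) * (S v w + T v w) * \<xi> w) \<le> (C + D) * ?a * ?b"
    by (simp add: algebra_simps)
qed

lemma mbound_scale:
  assumes "mbound T C" shows "mbound (mscale c T) (cmod c * C)"
  unfolding mbound_def mscale_def
proof (intro allI impI)
  fix A B :: "(nat\<times>nat) set" and \<eta> \<xi> :: "nat\<times>nat \<Rightarrow> complex"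
  assume fin: "finite A" "finite B"
  have "(\<Sum>v\<in>A. \<Sum>w\<in>B. cnj (\<eta> v) * (c * T v w) * \<xi> w) = c * (\<Sum>v\<in>A. \<Sum>w\<in>B. cnj (\<eta> v) * T v w * \<xi> w)"
    by (simp add: sum_distrib_left algebra_simps)
  then show "cmod (\<Sum>v\<in>A. \<Sum>w\<in>B. cnj (\<eta> v) * (c * T v w) * \<xi> w)
      \<le> cmod c * C * sqrt (\<Sum>v\<in>A. (cmod (\<eta> v))\<^sup>2) * sqrt (\<Sum>w\<in>B. (cmod (\<xi> w))\<^sup>2)"
    using assms fin unfolding mbound_def by (simp add: norm_mult mult.assoc mult_left_mono)
qed

lemma mbound_adj:
  assumes "mbound T C" shows "mbound (madj T) C"
  unfolding mbound_def madj_def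
proof (intro allI impI)
  fix A B :: "(nat\<times>nat) set" and \<eta> \<xi> :: "nat\<times>nat \<Rightarrow> complex"
  assume fin: "finite A" "finite B"
  define Z where "Z = (\<Sum>w\<in>B. \<Sum>v\<in>A. cnj (\<xi> w) * T w v * \<eta> v)"
  have Z: "cmod Z \<le> C * sqrt (\<Sum>w\<in>B. (cmod (\<xi> w))\<^sup>2) * sqrt (\<Sum>v\<in>A. (cmod (\<eta> v))\<^sup>2)"
    using assms fin unfolding mbound_def Z_def by blast
  have "(\<Sum>v\<in>A. \<Sum>w\<in>B. cnj (\<eta> v) * cnj (T w v) * \<xi> w) = cnj Z"
    unfolding Z_def by (subst sum.swap) (simp add: mult.commute mult.left_commute)
  then show "cmod (\<Sum>v\<in>A. \<Sum>w\<in>B. cnj (\<eta> v) * cnj (T w v) * \<xi> w)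
      \<le> C * sqrt (\<Sum>v\<in>A. (cmod (\<eta> v))\<^sup>2) * sqrt (\<Sum>w\<in>B. (cmod (\<xi> w))\<^sup>2)"
    using Z by (simp add: mult.commute mult.left_commute)
qed

lemma has_sum_finite_sum:
  fixes f :: "'i \<Rightarrow> 'a \<Rightarrow> complex"
  assumes "finite I" "\<And>i. i \<in> I \<Longrightarrow> f i summable_on A"
  shows "((\<lambda>x. \<Sum>i\<in>I. f i x) has_sum (\<Sum>i\<in>I. infsum (f i) A)) A"
  using assms
proof (induction I rule: finite_induct)
  case (insert j I)
  then show ?case by (simp add: has_sum_add)
qed simp

lemma abs_summable_product_l2:
  fixes f g :: "'a \<Rightarrow> complex"
  assumes f: "\<And>F. finite F \<Longrightarrow> (\<Sum>u\<in>F. (cmod (f u))\<^sup>2) \<le> a\<^sup>2"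
    and g: "\<And>F. finite F \<Longrightarrow> (\<Sum>u\<in>F. (cmod (g u))\<^sup>2) \<le> b\<^sup>2"
    and a: "a \<ge> 0" and b: "b \<ge> 0"
  shows "(\<lambda>u. cmod (f u * g u)) summable_on UNIV" "cmod (infsum (\<lambda>u. f u * g u) UNIV) \<le> a * b"
proof -
  have fs: "(\<Sum>u\<in>F. cmod (f u * g u)) \<le> a * b" if "finite F" for F
  proof -
    have "(\<Sum>u\<in>F. cmod (f u * g u)) = (\<Sum>u\<in>F. cmod (f u) * cmod (g u))" by (simp add: norm_mult)
    also have "\<dots> \<le> sqrt (\<Sum>u\<in>F. (cmod (f u))\<^sup>2) * sqrt (\<Sum>u\<in>F. (cmod (g u))\<^sup>2)"
      by (rule Cauchy_Schwarz_sum_sqrt)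
    also have "\<dots> \<le> sqrt (a\<^sup>2) * sqrt (b\<^sup>2)"
      using f[OF that] g[OF that] by (intro mult_mono real_sqrt_le_mono) (auto simp: sum_nonneg)
    finally show ?thesis using a b by simp
  qed
  show abs: "(\<lambda>u. cmod (f u * g u)) summable_on UNIV"
    unfolding abs_summable_iff_bdd_above using fs by (intro bdd_aboveI2) auto
  have "cmod (infsum (\<lambda>u. f u * g u) UNIV) \<le> infsum (\<lambda>u. cmod (f u * g u)) UNIV"
    by (rule norm_infsum_bound[OF abs])
  also have "\<dots> \<le> a * b" using abs fs by (intro infsum_le_finite_sums) auto
  finally show "cmod (infsum (\<lambda>u. f u * g u) UNIV) \<le> a * b" .
qed

text \<open>Testing the bilinear form against \<open>\<eta> = T \<xi>\<close> itself bounds \<open>\<parallel>T \<xi>\<parallel>\<^sup>2\<close> by \<open>C \<parallel>T \<xi>\<parallel> \<parallel>\<xi>\<parallel>\<close>.\<close>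

lemma mbound_image_l2:
  fixes \<xi> :: "nat\<times>nat \<Rightarrow> complex"
  assumes T: "mbound T C" and C: "C \<ge> 0" and fin: "finite U" "finite B"
  shows "(\<Sum>u\<in>U. (cmod (\<Sum>w\<in>B. T u w * \<xi> w))\<^sup>2) \<le> C\<^sup>2 * (\<Sum>w\<in>B. (cmod (\<xi> w))\<^sup>2)"
proof -
  define y where "y u = (\<Sum>w\<in>B. T u w * \<xi> w)" for u
  define Y where "Y = (\<Sum>u\<in>U. (cmod (y u))\<^sup>2)"
  define X where "X = (\<Sum>w\<in>B. (cmod (\<xi> w))\<^sup>2)"
  have Y0: "Y \<ge> 0" and X0: "X \<ge> 0" unfolding Y_def X_def by (auto intro: sum_nonneg)
  have "(\<Sum>u\<in>U. \<Sum>w\<in>B. cnj (y u) * T u w * \<xi> w) = (\<Sum>u\<in>U. cnj (y u) * y u)"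
    unfolding y_def by (simp add: sum_distrib_left mult.assoc)
  also have "\<dots> = (\<Sum>u\<in>U. of_real ((cmod (y u))\<^sup>2))"
    by (rule sum.cong[OF refl]) (metis complex_norm_square mult.commute)
  also have "\<dots> = of_real Y" unfolding Y_def by (rule of_real_sum[symmetric])
  finally have eq: "(\<Sum>u\<in>U. \<Sum>w\<in>B. cnj (y u) * T u w * \<xi> w) = of_real Y" .
  have "cmod (\<Sum>u\<in>U. \<Sum>w\<in>B. cnj (y u) * T u w * \<xi> w) \<le> C * sqrt Y * sqrt X"
    using T fin unfolding mbound_def Y_def X_def by blast
  then have YY: "sqrt Y * sqrt Y \<le> (C * sqrt X) * sqrt Y" using eq Y0 by (simp add: mult_ac)
  have "sqrt Y \<le> C * sqrt X"
  proof (cases "Y = 0")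
    case True then show ?thesis using C X0 by simp
  next
    case False
    then have "sqrt Y > 0" using Y0 by simp
    then show ?thesis using YY mult_right_le_imp_le by blast
  qed
  then have "(sqrt Y)\<^sup>2 \<le> (C * sqrt X)\<^sup>2" using Y0 by (intro power_mono) auto
  then show ?thesis using Y0 X0 unfolding Y_def[symmetric] X_def[symmetric] y_def[symmetric]
    by (simp add: power_mult_distrib)
qed

lemma mbound_column_l2:
  assumes "mbound T C" "C \<ge> 0" "finite U"
  shows "(\<Sum>u\<in>U. (cmod (T u w))\<^sup>2) \<le> C\<^sup>2"
  using mbound_image_l2[OF assms, of "{w}" "\<lambda>_. 1"] by simp

lemma mbound_row_l2:
  assumes "mbound S C" "C \<ge> 0" "finite U"
  shows "(\<Sum>u\<in>U. (cmod (S v u))\<^sup>2) \<le> C\<^sup>2"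
  using mbound_column_l2[OF mbound_adj[OF assms(1)] assms(2,3), of v] by (simp add: madj_def)

lemma mmult_summable:
  assumes "mbound S C" "mbound T D" "C \<ge> 0" "D \<ge> 0"
  shows "(\<lambda>u. S v u * T u w) summable_on UNIV"
proof (rule abs_summable_summable)
  show "(\<lambda>u. cmod (S v u * T u w)) summable_on UNIV"
    using abs_summable_product_l2(1)[of "\<lambda>u. S v u" C "\<lambda>u. T u w" D]
      mbound_row_l2 mbound_column_l2 assms by blast
qed

lemma bop_mmult_summable:
  "S \<in> bop s \<Longrightarrow> T \<in> bop s \<Longrightarrow> (\<lambda>u. S v u * T u w) summable_on UNIV"
  by (metis bop_obtain_mbound mmult_summable)

lemma mmult_bilinear_form:
  assumes S: "mbound S C" and T: "mbound T D" and C: "C \<ge> 0" and D: "D \<ge> 0"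
    and fin: "finite A" "finite B"
  shows "(\<Sum>v\<in>A. \<Sum>w\<in>B. cnj (\<eta> v) * mmult S T v w * \<xi> w)
       = (\<Sum>\<^sub>\<infinity>u. (\<Sum>v\<in>A. cnj (\<eta> v) * S v u) * (\<Sum>w\<in>B. T u w * \<xi> w))"
proof -
  define h where "h v w u = cnj (\<eta> v) * (S v u * T u w) * \<xi> w" for v w u
  have sm: "(\<lambda>u. h v w u) summable_on UNIV" for v w
    unfolding h_def
    by (intro summable_on_cmult_left summable_on_cmult_right mmult_summable[OF S T C D])
  have inner: "(\<lambda>u. \<Sum>w\<in>B. h v w u) summable_on UNIV"
    "(\<Sum>\<^sub>\<infinity>u. \<Sum>w\<in>B. h v w u) = (\<Sum>w\<in>B. \<Sum>\<^sub>\<infinity>u. h v w u)" for v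
    using has_sum_finite_sum[OF fin(2), of "\<lambda>w u. h v w u" UNIV] sm
    by (auto simp: summable_on_def infsumI)
  have "(\<Sum>v\<in>A. \<Sum>w\<in>B. cnj (\<eta> v) * mmult S T v w * \<xi> w) = (\<Sum>v\<in>A. \<Sum>w\<in>B. \<Sum>\<^sub>\<infinity>u. h v w u)"
    unfolding mmult_def h_def by (simp add: infsum_cmult_left' infsum_cmult_right')
  also have "\<dots> = (\<Sum>v\<in>A. \<Sum>\<^sub>\<infinity>u. \<Sum>w\<in>B. h v w u)"
    using inner(2) by simp
  also have "\<dots> = (\<Sum>\<^sub>\<infinity>u. \<Sum>v\<in>A. \<Sum>w\<in>B. h v w u)"
    using has_sum_finite_sum[OF fin(1), of "\<lambda>v u. \<Sum>w\<in>B. h v w u" UNIV] inner(1)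
    by (simp add: infsumI)
  finally show ?thesis
    unfolding h_def by (simp add: sum_distrib_left sum_distrib_right mult_ac)
qed

lemma mbound_mult:
  assumes S: "mbound S C" and T: "mbound T D" and C: "C \<ge> 0" and D: "D \<ge> 0"
  shows "mbound (mmult S T) (C * D)"
  unfolding mbound_def
proof (intro allI impI)
  fix A B :: "(nat\<times>nat) set" and \<eta> \<xi> :: "nat\<times>nat \<Rightarrow> complex"
  assume fin: "finite A" "finite B"
  define a where "a = sqrt (\<Sum>v\<in>A. (cmod (\<eta> v))\<^sup>2)"
  define b where "b = sqrt (\<Sum>w\<in>B. (cmod (\<xi> w))\<^sup>2)"
  have a0: "a \<ge> 0" and b0: "b \<ge> 0" unfolding a_def b_def by (auto intro: sum_nonneg)
  define \<alpha> where "\<alpha> u = (\<Sum>v\<in>A. cnj (\<eta> v) * S v u)" for u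
  define \<beta> where "\<beta> u = (\<Sum>w\<in>B. T u w * \<xi> w)" for u
  have \<alpha>_adj: "cmod (\<alpha> u) = cmod (\<Sum>v\<in>A. madj S u v * \<eta> v)" for u
  proof -
    have "\<alpha> u = cnj (\<Sum>v\<in>A. madj S u v * \<eta> v)" unfolding \<alpha>_def madj_def by (simp add: mult.commute)
    then show ?thesis by (simp only: complex_mod_cnj)
  qed
  have \<alpha>: "(\<Sum>u\<in>F. (cmod (\<alpha> u))\<^sup>2) \<le> (C * a)\<^sup>2" if "finite F" for F
  proof -
    have "(\<Sum>u\<in>F. (cmod (\<alpha> u))\<^sup>2) \<le> C\<^sup>2 * a\<^sup>2"
      unfolding \<alpha>_adj using mbound_image_l2[OF mbound_adj[OF S] C that fin(1)] a0
      unfolding a_def by (simp add: sum_nonneg)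
    then show ?thesis by (simp add: power_mult_distrib)
  qed
  have \<beta>: "(\<Sum>u\<in>F. (cmod (\<beta> u))\<^sup>2) \<le> (D * b)\<^sup>2" if "finite F" for F
    using mbound_image_l2[OF T D that fin(2), of \<xi>] b0
    unfolding \<beta>_def b_def by (simp add: power_mult_distrib sum_nonneg)
  have eq: "(\<Sum>v\<in>A. \<Sum>w\<in>B. cnj (\<eta> v) * mmult S T v w * \<xi> w) = (\<Sum>\<^sub>\<infinity>u. \<alpha> u * \<beta> u)"
    unfolding \<alpha>_def \<beta>_def by (rule mmult_bilinear_form[OF S T C D fin])
  have "cmod (\<Sum>\<^sub>\<infinity>u. \<alpha> u * \<beta> u) \<le> (C * a) * (D * b)"
    by (rule abs_summable_product_l2(2)) (use \<alpha> \<beta> C D a0 b0 in auto)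
  then show "cmod (\<Sum>v\<in>A. \<Sum>w\<in>B. cnj (\<eta> v) * mmult S T v w * \<xi> w)
      \<le> C * D * sqrt (\<Sum>v\<in>A. (cmod (\<eta> v))\<^sup>2) * sqrt (\<Sum>w\<in>B. (cmod (\<xi> w))\<^sup>2)"
    unfolding eq a_def b_def by (simp add: mult_ac)
qed

lemma bop_add:
  assumes S: "S \<in> bop s" and T: "T \<in> bop s" shows "madd S T \<in> bop s"
proof -
  obtain C D where "mbound S C" "mbound T D" using S T bop_obtain_mbound by metis
  then show ?thesis using S T
    by (intro bopI[OF mbound_add]) (simp_all add: madd_def bop_row_outside bop_column_outside)
qed

lemma bop_scale: "T \<in> bop s \<Longrightarrow> mscale c T \<in> bop s"
proof -
  assume T: "T \<in> bop s"
  then obtain C where "C \<ge> 0" "mbound T C" using bop_obtain_mbound by blast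
  then show ?thesis using T
    by (intro bopI[OF mbound_scale]) (simp_all add: mscale_def bop_row_outside bop_column_outside)
qed

lemma bop_adj: "T \<in> bop s \<Longrightarrow> madj T \<in> bop s"
proof -
  assume T: "T \<in> bop s"
  then obtain C where "C \<ge> 0" "mbound T C" using bop_obtain_mbound by blast
  then show ?thesis using T
    by (intro bopI[OF mbound_adj]) (simp_all add: madj_def bop_row_outside bop_column_outside)
qed

lemma mdiff_eq_madd_mscale: "mdiff S T = madd S (mscale (-1) T)"
  by (simp add: mdiff_def madd_def mscale_def)

lemma bop_diff: "S \<in> bop s \<Longrightarrow> T \<in> bop s \<Longrightarrow> mdiff S T \<in> bop s"
  unfolding mdiff_eq_madd_mscale by (intro bop_add bop_scale)

lemma bop_mult:
  assumes S: "S \<in> bop s" and T: "T \<in> bop s" shows "mmult S T \<in> bop s"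
proof -
  obtain C D where CD: "C \<ge> 0" "D \<ge> 0" "mbound S C" "mbound T D"
    using S T bop_obtain_mbound by metis
  show ?thesis
    by (rule bopI[OF mbound_mult[OF CD(3,4,1,2)]])
      (simp_all add: mmult_def bop_row_outside[OF S] bop_column_outside[OF T])
qed

lemma opnorm_zero: "opnorm mzero = 0"
  using opnorm_le[OF mbound_zero] opnorm_nonneg[OF mbound_zero] by simp

lemma opnorm_add_le: "S \<in> bop s \<Longrightarrow> T \<in> bop s \<Longrightarrow> opnorm (madd S T) \<le> opnorm S + opnorm T"
  by (meson add_nonneg_nonneg mbound_add opnorm_le mbound_opnorm opnorm_nonneg_bop)

lemma opnorm_scale_le: "T \<in> bop s \<Longrightarrow> opnorm (mscale c T) \<le> cmod c * opnorm T"
  by (meson mbound_scale mult_nonneg_nonneg norm_ge_zero opnorm_le mbound_opnorm opnorm_nonneg_bop)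

lemma opnorm_adj_le: "T \<in> bop s \<Longrightarrow> opnorm (madj T) \<le> opnorm T"
  by (meson mbound_adj opnorm_le mbound_opnorm opnorm_nonneg_bop)

lemma opnorm_mult_le: "S \<in> bop s \<Longrightarrow> T \<in> bop s \<Longrightarrow> opnorm (mmult S T) \<le> opnorm S * opnorm T"
  by (meson mbound_mult mult_nonneg_nonneg opnorm_le mbound_opnorm opnorm_nonneg_bop)

lemma opnorm_diff_commute:
  assumes "S \<in> bop s" "T \<in> bop s" shows "opnorm (mdiff S T) = opnorm (mdiff T S)"
proof -
  have le: "opnorm (mdiff S T) \<le> opnorm (mdiff T S)" if "S \<in> bop s" "T \<in> bop s" for S T
  proof -
    have "mdiff S T = mscale (-1) (mdiff T S)" by (simp add: mdiff_def mscale_def)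
    then show ?thesis using opnorm_scale_le[OF bop_diff[OF that(2,1)], of "-1"] by simp
  qed
  show ?thesis using le[OF assms] le[OF assms(2,1)] by simp
qed

lemma opnorm_diff_triangle:
  assumes "R \<in> bop s" "S \<in> bop s" "T \<in> bop s"
  shows "opnorm (mdiff R T) \<le> opnorm (mdiff R S) + opnorm (mdiff S T)"
proof -
  have "mdiff R T = madd (mdiff R S) (mdiff S T)" by (simp add: mdiff_def madd_def)
  then show ?thesis using opnorm_add_le[OF bop_diff[OF assms(1,2)] bop_diff[OF assms(2,3)]] by simp
qed

lemma mmult_madd_left: "S1 \<in> bop s \<Longrightarrow> S2 \<in> bop s \<Longrightarrow> T \<in> bop s \<Longrightarrow>
  mmult (madd S1 S2) T = madd (mmult S1 T) (mmult S2 T)"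
  unfolding mmult_def madd_def
  by (auto simp: fun_eq_iff distrib_right intro!: infsum_add bop_mmult_summable)

lemma mmult_madd_right: "S \<in> bop s \<Longrightarrow> T1 \<in> bop s \<Longrightarrow> T2 \<in> bop s \<Longrightarrow>
  mmult S (madd T1 T2) = madd (mmult S T1) (mmult S T2)"
  unfolding mmult_def madd_def
  by (auto simp: fun_eq_iff distrib_left intro!: infsum_add bop_mmult_summable)

lemma mmult_mscale_left: "mmult (mscale c S) T = mscale c (mmult S T)"
  by (simp add: fun_eq_iff mmult_def mscale_def mult.assoc infsum_cmult_right')

lemma mmult_mscale_right: "mmult S (mscale c T) = mscale c (mmult S T)"
  by (simp add: fun_eq_iff mmult_def mscale_def mult.left_commute infsum_cmult_right')

lemma mdiff_mmult_split:
  assumes "X \<in> bop s" "S \<in> bop s" "Y \<in> bop s" "T \<in> bop s"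
  shows "mdiff (mmult X Y) (mmult S T) = madd (mmult (mdiff X S) Y) (mmult S (mdiff Y T))"
proof -
  have "mmult (mdiff X S) Y = madd (mmult X Y) (mscale (-1) (mmult S Y))"
    unfolding mdiff_eq_madd_mscale using assms
      by (simp add: mmult_madd_left bop_scale mmult_mscale_left)
  moreover have "mmult S (mdiff Y T) = madd (mmult S Y) (mscale (-1) (mmult S T))"
    unfolding mdiff_eq_madd_mscale using assms
      by (simp add: mmult_madd_right bop_scale mmult_mscale_right)
  ultimately show ?thesis by (simp add: fun_eq_iff mdiff_def madd_def mscale_def)
qed

lemma mbound_monomial:
  fixes \<pi> :: "nat\<times>nat \<Rightarrow> nat\<times>nat"
  assumes supp: "\<And>v w. T v w \<noteq> 0 \<Longrightarrow> w = \<pi> v"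
    and inj: "\<And>v v'. T v (\<pi> v) \<noteq> 0 \<Longrightarrow> T v' (\<pi> v') \<noteq> 0 \<Longrightarrow> \<pi> v = \<pi> v' \<Longrightarrow> v = v'"
    and bd: "\<And>v w. cmod (T v w) \<le> C" and C: "C \<ge> 0"
  shows "mbound T C"
  unfolding mbound_def
proof (intro allI impI)
  fix A B :: "(nat\<times>nat) set" and \<eta> \<xi> :: "nat\<times>nat \<Rightarrow> complex"
  assume fin: "finite A" "finite B"
  define A' where "A' = {v \<in> A. \<pi> v \<in> B \<and> T v (\<pi> v) \<noteq> 0}"
  have row: "(\<Sum>w\<in>B. cnj (\<eta> v) * T v w * \<xi> w)
      = (if \<pi> v \<in> B \<and> T v (\<pi> v) \<noteq> 0 then cnj (\<eta> v) * T v (\<pi> v) * \<xi> (\<pi> v) else 0)" for v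
  proof -
    have "(\<Sum>w\<in>B. cnj (\<eta> v) * T v w * \<xi> w)
        = (\<Sum>w\<in>B. if w = \<pi> v then cnj (\<eta> v) * T v (\<pi> v) * \<xi> (\<pi> v) else 0)"
      by (rule sum.cong[OF refl]) (metis mult_zero_left mult_zero_right supp)
    then show ?thesis using fin(2) by (auto simp: sum.delta')
  qed
  have A': "(\<Sum>v\<in>A'. (cmod (\<eta> v))\<^sup>2) \<le> (\<Sum>v\<in>A. (cmod (\<eta> v))\<^sup>2)"
    using fin by (intro sum_mono2) (auto simp: A'_def)
  have "inj_on \<pi> A'" using inj unfolding A'_def inj_on_def by blast
  then have "(\<Sum>v\<in>A'. (cmod (\<xi> (\<pi> v)))\<^sup>2) = (\<Sum>w\<in>\<pi> ` A'. (cmod (\<xi> w))\<^sup>2)"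
    by (simp add: sum.reindex)
  also have "\<dots> \<le> (\<Sum>w\<in>B. (cmod (\<xi> w))\<^sup>2)"
    using fin by (intro sum_mono2) (auto simp: A'_def)
  finally have \<pi>A': "(\<Sum>v\<in>A'. (cmod (\<xi> (\<pi> v)))\<^sup>2) \<le> (\<Sum>w\<in>B. (cmod (\<xi> w))\<^sup>2)" .
  have "(\<Sum>v\<in>A. \<Sum>w\<in>B. cnj (\<eta> v) * T v w * \<xi> w) = (\<Sum>v\<in>A'. cnj (\<eta> v) * T v (\<pi> v) * \<xi> (\<pi> v))"
    unfolding row A'_def using fin(1) by (simp add: sum.inter_filter)
  then have "cmod (\<Sum>v\<in>A. \<Sum>w\<in>B. cnj (\<eta> v) * T v w * \<xi> w) \<le> (\<Sum>v\<in>A'. cmod (\<eta> v) * C * cmod (\<xi> (\<pi> v)))"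
    using C by (auto intro!: order_trans[OF norm_sum] sum_mono mult_mono bd simp: norm_mult)
  also have "\<dots> = C * (\<Sum>v\<in>A'. cmod (\<eta> v) * cmod (\<xi> (\<pi> v)))"
    by (simp add: sum_distrib_left mult_ac)
  also have "\<dots> \<le> C * (sqrt (\<Sum>v\<in>A'. (cmod (\<eta> v))\<^sup>2) * sqrt (\<Sum>v\<in>A'. (cmod (\<xi> (\<pi> v)))\<^sup>2))"
    using C by (intro mult_left_mono Cauchy_Schwarz_sum_sqrt)
  also have "\<dots> \<le> C * (sqrt (\<Sum>v\<in>A. (cmod (\<eta> v))\<^sup>2) * sqrt (\<Sum>w\<in>B. (cmod (\<xi> w))\<^sup>2))"
    using C A' \<pi>A' by (intro mult_left_mono mult_mono real_sqrt_le_mono) (auto simp: sum_nonneg)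
  finally show "cmod (\<Sum>v\<in>A. \<Sum>w\<in>B. cnj (\<eta> v) * T v w * \<xi> w)
      \<le> C * sqrt (\<Sum>v\<in>A. (cmod (\<eta> v))\<^sup>2) * sqrt (\<Sum>w\<in>B. (cmod (\<xi> w))\<^sup>2)"
    by (simp add: mult_ac)
qed

lemma mbound_diagonal:
  assumes "\<And>v w. T v w \<noteq> 0 \<Longrightarrow> v = w" "\<And>v. cmod (T v v) \<le> C" "C \<ge> 0"
  shows "mbound T C"
  by (rule mbound_monomial[where \<pi>=id]) (use assms in \<open>auto, metis norm_zero\<close>)

text \<open>The level of \<open>E\<^sub>(\<^sub>n\<^sub>,\<^sub>x\<^sub>)\<close> is \<open>n\<close>; \<open>mexpect\<close> is the conditional expectation onto the
  gauge-invariant operators.\<close>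

definition mexpect :: "mat \<Rightarrow> mat" where
  "mexpect T = (\<lambda>v w. if fst v = fst w then T v w else 0)"

lemma bilinear_form_mexpect:
  assumes fin: "finite A" "finite B"
  shows "(\<Sum>v\<in>A. \<Sum>w\<in>B. cnj (\<eta> v) * mexpect T v w * \<xi> w)
    = (\<Sum>n\<in>fst ` A. \<Sum>v\<in>{v \<in> A. fst v = n}. \<Sum>w\<in>{w \<in> B. fst w = n}. cnj (\<eta> v) * T v w * \<xi> w)"
proof -
  define g where "g v w = cnj (\<eta> v) * T v w * \<xi> w" for v w
  have row: "(\<Sum>w\<in>B. cnj (\<eta> v) * mexpect T v w * \<xi> w) = (\<Sum>w\<in>{w \<in> B. fst w = fst v}. g v w)" for v
  proof -
    have "(\<Sum>w\<in>B. cnj (\<eta> v) * mexpect T v w * \<xi> w) = (\<Sum>w\<in>B. if fst w = fst v then g v w else 0)"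
      by (rule sum.cong) (auto simp: mexpect_def g_def)
    then show ?thesis using fin(2) by (simp add: sum.inter_filter)
  qed
  have "(\<Sum>v\<in>A. \<Sum>w\<in>{w \<in> B. fst w = fst v}. g v w)
      = (\<Sum>n\<in>fst ` A. \<Sum>v\<in>{v \<in> A. fst v = n}. \<Sum>w\<in>{w \<in> B. fst w = fst v}. g v w)"
    using fin by (intro sum.group[symmetric]) auto
  also have "\<dots> = (\<Sum>n\<in>fst ` A. \<Sum>v\<in>{v \<in> A. fst v = n}. \<Sum>w\<in>{w \<in> B. fst w = n}. g v w)"
    by (intro sum.cong refl) auto
  finally show ?thesis using row by (simp add: g_def)
qed

lemma mbound_mexpect:
  assumes T: "mbound T C" and C: "C \<ge> 0"
  shows "mbound (mexpect T) C"
  unfolding mbound_def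
proof (intro allI impI)
  fix A B :: "(nat\<times>nat) set" and \<eta> \<xi> :: "nat\<times>nat \<Rightarrow> complex"
  assume fin: "finite A" "finite B"
  define N where "N = fst ` A"
  define An where "An n = {v \<in> A. fst v = n}" for n
  define Bn where "Bn n = {w \<in> B. fst w = n}" for n
  define a where "a n = (\<Sum>v\<in>An n. (cmod (\<eta> v))\<^sup>2)" for n
  define b where "b n = (\<Sum>w\<in>Bn n. (cmod (\<xi> w))\<^sup>2)" for n
  have finN: "finite N" "\<And>n. finite (An n)" "\<And>n. finite (Bn n)"
    using fin unfolding N_def An_def Bn_def by auto
  have a: "(\<Sum>n\<in>N. a n) = (\<Sum>v\<in>A. (cmod (\<eta> v))\<^sup>2)"
    unfolding a_def An_def N_def using fin by (intro sum.group) auto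
  have "(\<Sum>n\<in>N. b n) = (\<Sum>n\<in>N. \<Sum>w\<in>{w\<in>{w\<in>B. fst w \<in> N}. fst w = n}. (cmod (\<xi> w))\<^sup>2)"
    unfolding b_def Bn_def by (intro sum.cong refl) auto
  also have "\<dots> = (\<Sum>w\<in>{w\<in>B. fst w \<in> N}. (cmod (\<xi> w))\<^sup>2)"
    using fin finN by (intro sum.group) auto
  also have "\<dots> \<le> (\<Sum>w\<in>B. (cmod (\<xi> w))\<^sup>2)" using fin by (intro sum_mono2) auto
  finally have b: "(\<Sum>n\<in>N. b n) \<le> (\<Sum>w\<in>B. (cmod (\<xi> w))\<^sup>2)" .
  have each: "cmod (\<Sum>v\<in>An n. \<Sum>w\<in>Bn n. cnj (\<eta> v) * T v w * \<xi> w) \<le> C * sqrt (a n) * sqrt (b n)" for n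
    using T finN(2,3) unfolding mbound_def a_def b_def by blast
  have "cmod (\<Sum>v\<in>A. \<Sum>w\<in>B. cnj (\<eta> v) * mexpect T v w * \<xi> w)
      \<le> (\<Sum>n\<in>N. cmod (\<Sum>v\<in>An n. \<Sum>w\<in>Bn n. cnj (\<eta> v) * T v w * \<xi> w))"
    unfolding bilinear_form_mexpect[OF fin] N_def[symmetric] An_def[symmetric] Bn_def[symmetric]
    by (rule norm_sum)
  also have "\<dots> \<le> C * (\<Sum>n\<in>N. sqrt (a n) * sqrt (b n))"
    using sum_mono[OF each] by (simp add: sum_distrib_left mult_ac)
  also have "\<dots> \<le> C * (sqrt (\<Sum>n\<in>N. (sqrt (a n))\<^sup>2) * sqrt (\<Sum>n\<in>N. (sqrt (b n))\<^sup>2))"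
    using C by (intro mult_left_mono Cauchy_Schwarz_sum_sqrt)
  also have "\<dots> \<le> C * (sqrt (\<Sum>v\<in>A. (cmod (\<eta> v))\<^sup>2) * sqrt (\<Sum>w\<in>B. (cmod (\<xi> w))\<^sup>2))"
    using C a b by (intro mult_left_mono mult_mono real_sqrt_le_mono)
      (auto simp: a_def b_def sum_nonneg)
  finally show "cmod (\<Sum>v\<in>A. \<Sum>w\<in>B. cnj (\<eta> v) * mexpect T v w * \<xi> w)
      \<le> C * sqrt (\<Sum>v\<in>A. (cmod (\<eta> v))\<^sup>2) * sqrt (\<Sum>w\<in>B. (cmod (\<xi> w))\<^sup>2)"
    by (simp add: mult_ac)
qed

lemma bop_mexpect: "T \<in> bop s \<Longrightarrow> mexpect T \<in> bop s"
proof -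
  assume T: "T \<in> bop s"
  then obtain C where "C \<ge> 0" "mbound T C" using bop_obtain_mbound by blast
  then show ?thesis using T
    by (intro bopI[OF mbound_mexpect])
      (simp_all add: mexpect_def bop_row_outside bop_column_outside)
qed

lemma opnorm_mexpect_le: "T \<in> bop s \<Longrightarrow> opnorm (mexpect T) \<le> opnorm T"
  by (meson mbound_mexpect opnorm_le mbound_opnorm opnorm_nonneg_bop)

section \<open>The s-adic integers\<close>

lemma tendsto_digitwise_iff:
  "((g :: 'a \<Rightarrow> nat \<Rightarrow> nat) \<longlongrightarrow> a) F \<longleftrightarrow> (\<forall>k. ((\<lambda>N. g N k) \<longlongrightarrow> a k) F)"
proof -
  have "(g \<longlongrightarrow> a) F \<longleftrightarrow> limitin (product_topology (\<lambda>_. euclidean) UNIV) g a F"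
    by (simp add: euclidean_product_topology)
  also have "\<dots> \<longleftrightarrow> (\<forall>k. ((\<lambda>N. g N k) \<longlongrightarrow> a k) F)"
    by (subst limitin_componentwise) simp
  finally show ?thesis .
qed

lemma compact_Zs: "compact (Zs s)"
proof -
  have "Zs s = PiE UNIV (\<lambda>_. {..<s})" by (auto simp: Zs_def PiE_def Pi_def)
  moreover have "compactin (product_topology (\<lambda>_. euclidean) UNIV) (PiE UNIV (\<lambda>_. {..<s::nat}))"
    by (simp add: compactin_PiE finite_imp_compact)
  ultimately show ?thesis by (simp add: euclidean_product_topology)
qed

lemma sdigits_in_Zs: "s > 0 \<Longrightarrow> sdigits s x \<in> Zs s"
  by (simp add: sdigits_def Zs_def)

lemma sdigits_zero: "sdigits s 0 = (\<lambda>k. 0)"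
  by (simp add: sdigits_def)

text \<open>The integer with base-\<open>s\<close> digits \<open>a 0, \<dots>, a (N - 1), 1\<close>. The final digit \<open>1\<close> makes it
  positive, so that the positive integers are already dense in \<open>\<int>\<^sub>s\<close>.\<close>

fun int_prefix :: "nat \<Rightarrow> (nat \<Rightarrow> nat) \<Rightarrow> nat \<Rightarrow> nat" where
  "int_prefix s a 0 = 1"
| "int_prefix s a (Suc N) = a 0 + s * int_prefix s (\<lambda>i. a (Suc i)) N"

lemma sdigits_int_prefix: "(\<forall>i. a i < s) \<Longrightarrow> k < N \<Longrightarrow> sdigits s (int_prefix s a N) k = a k"
proof (induction N arbitrary: a k)
  case (Suc N)
  define y where "y = int_prefix s (\<lambda>i. a (Suc i)) N"
  have x: "int_prefix s a (Suc N) = a 0 + s * y" unfolding y_def by simp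
  have "s > 0" using Suc.prems by (metis gr_zeroI not_less_zero)
  show ?case
  proof (cases k)
    case 0 then show ?thesis using Suc.prems unfolding x sdigits_def by simp
  next
    case (Suc k')
    have "(a 0 + s * y) div s = y" using Suc.prems \<open>s > 0\<close> by simp
    then have "(a 0 + s * y) div s ^ k = y div s ^ k'"
      using Suc by (simp add: div_mult2_eq)
    then have "sdigits s (int_prefix s a (Suc N)) k = sdigits s y k'" unfolding x sdigits_def
      by simp
    also have "\<dots> = a k" unfolding y_def using Suc.IH[of "\<lambda>i. a (Suc i)" k'] Suc.prems Suc by simp
    finally show ?thesis .
  qed
qed simp

lemma int_prefix_pos: "s > 0 \<Longrightarrow> int_prefix s a N \<ge> 1"
proof (induction N arbitrary: a)
  case (Suc N)
  then have "1 * 1 \<le> s * int_prefix s (\<lambda>i. a (Suc i)) N" by (intro mult_mono) auto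
  then show ?case by (subst int_prefix.simps(2)) linarith
qed simp

lemma int_prefix_tendsto: "a \<in> Zs s \<Longrightarrow> (\<lambda>N. sdigits s (int_prefix s a N)) \<longlonglongrightarrow> a"
  unfolding tendsto_digitwise_iff
proof
  fix k assume a: "a \<in> Zs s"
  have "eventually (\<lambda>N. sdigits s (int_prefix s a N) k = a k) sequentially"
    unfolding eventually_sequentially using a sdigits_int_prefix[of a s k]
    by (auto simp: Zs_def intro!: exI[of _ "Suc k"])
  then show "(\<lambda>N. sdigits s (int_prefix s a N) k) \<longlonglongrightarrow> a k" by (rule tendsto_eventually)
qed

lemma norm_le_if_le_on_positive_ints:
  fixes h :: "(nat \<Rightarrow> nat) \<Rightarrow> complex"
  assumes s: "s > 0" and h: "continuous_on (Zs s) h"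
    and b: "\<And>x. x \<ge> 1 \<Longrightarrow> cmod (h (sdigits s x)) \<le> B" and a: "a \<in> Zs s"
  shows "cmod (h a) \<le> B"
proof -
  have "(\<lambda>N. h (sdigits s (int_prefix s a N))) \<longlonglongrightarrow> h a"
    using continuous_on_tendsto_compose[OF h int_prefix_tendsto[OF a] a] sdigits_in_Zs[OF s] by simp
  moreover have "eventually (\<lambda>N. cmod (h (sdigits s (int_prefix s a N))) \<le> B) sequentially"
    using b int_prefix_pos[OF s] by simp
  ultimately show ?thesis by (rule Lim_norm_ubound[rotated]) simp
qed

lemma eq_if_eq_on_positive_ints:
  fixes f g :: "(nat \<Rightarrow> nat) \<Rightarrow> complex"
  assumes s: "s > 0" and f: "continuous_on (Zs s) f" and g: "continuous_on (Zs s) g"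
    and eq: "\<And>x. x \<ge> 1 \<Longrightarrow> f (sdigits s x) = g (sdigits s x)" and a: "a \<in> Zs s"
  shows "f a = g a"
  using norm_le_if_le_on_positive_ints[OF s _ _ a, of "\<lambda>a. f a - g a" 0] f g eq
  by (auto intro: continuous_on_diff)

lemma CZs_bounded: "f \<in> CZs s \<Longrightarrow> \<exists>B\<ge>0. \<forall>a. cmod (f a) \<le> B"
proof -
  assume f: "f \<in> CZs s"
  then have "compact (f ` Zs s)" using compact_continuous_image compact_Zs by (auto simp: CZs_def)
  then obtain B where B: "\<forall>y\<in>f ` Zs s. norm y \<le> B" using compact_imp_bounded bounded_iff by metis
  have "cmod (f a) \<le> max B 0" for a using f B by (cases "a \<in> Zs s") (auto simp: CZs_def)
  then show ?thesis by (meson max.cobounded2)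
qed

section \<open>The map \<open>T\<^sub>V\<close> and diagonal operators\<close>

lemma CXV_iff:
  "F \<in> CXV s \<longleftrightarrow> continuous_on (Zs s) (fst F) \<and> (\<forall>a. a \<notin> Zs s \<longrightarrow> fst F a = 0)
     \<and> snd F \<longlonglongrightarrow> fst F (sdigits s 0)"
  by (cases F) (auto simp: CXV_def CZs_def)

lemma CXVI:
  "continuous_on (Zs s) (fst F) \<Longrightarrow> (\<And>a. a \<notin> Zs s \<Longrightarrow> fst F a = 0)
     \<Longrightarrow> snd F \<longlonglongrightarrow> fst F (sdigits s 0) \<Longrightarrow> F \<in> CXV s"
  by (simp add: CXV_iff)

definition tv_diag :: "nat \<Rightarrow> ((nat \<Rightarrow> nat) \<Rightarrow> complex) \<times> (nat \<Rightarrow> complex) \<Rightarrow> nat \<times> nat \<Rightarrow> complex" where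
  "tv_diag s F v = (if snd v = 0 then snd F (fst v) else fst F (sdigits s (snd v)))"

lemma tv_diag_bounded:
  assumes "F \<in> CXV s" shows "\<exists>B\<ge>0. \<forall>v. cmod (tv_diag s F v) \<le> B"
proof -
  obtain f x where F: "F = (f, x)" by fastforce
  have f: "f \<in> CZs s" and x: "x \<longlonglongrightarrow> f (sdigits s 0)" using assms F by (auto simp: CXV_def)
  obtain B1 where B1: "B1 \<ge> 0" "\<forall>a. cmod (f a) \<le> B1" using CZs_bounded[OF f] by blast
  obtain B2 where B2: "\<forall>n. cmod (x n) \<le> B2"
    using convergent_imp_Bseq[of x] x unfolding Bseq_def convergent_def by blast
  have "cmod (tv_diag s F v) \<le> max B1 B2" for v
    using B1 B2 unfolding tv_diag_def F by (auto intro: max.coboundedI1 max.coboundedI2)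
  then show ?thesis using B1 by (meson max.coboundedI1)
qed

lemma Vset_iff: "v \<in> Vset s \<longleftrightarrow> snd v < s ^ fst v"
  by (cases v) (simp add: Vset_def)

lemma Vset_level_zero: "s > 0 \<Longrightarrow> (n, 0) \<in> Vset s"
  by (simp add: Vset_def)

lemma TV_eq:
  assumes s: "s > 0"
  shows "TV s F v w = (if v = w \<and> v \<in> Vset s then tv_diag s F v else 0)"
proof -
  obtain f x where F: "F = (f, x)" by fastforce
  define c where "c = (if v = w \<and> snd v = 0 then x (fst v) - f (sdigits s 0) else 0)"
  have "(\<lambda>n. mscale (x n - f (sdigits s 0)) (Pn s n) v w) = (\<lambda>n. if n = fst v then c else 0)"
    unfolding c_def mscale_def Pn_def by (cases v, cases w) auto
  then have "(\<Sum>n. mscale (x n - f (sdigits s 0)) (Pn s n) v w) = c"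
    using sums_unique[OF sums_single[of "fst v" "\<lambda>_. c"]] by simp
  then show ?thesis
    unfolding TV_def F prod.case madd_def c_def Mop_def tv_diag_def
    using Vset_level_zero[OF s] by (cases v) auto
qed

lemma bop_diagonal:
  assumes "\<And>v w. T v w \<noteq> 0 \<Longrightarrow> v = w \<and> v \<in> Vset s" "\<And>v. cmod (T v v) \<le> C" "C \<ge> 0"
  shows "T \<in> bop s"
  by (rule bopI[OF mbound_diagonal[of T C]]) (use assms in blast)+

lemma TV_bop: "s > 0 \<Longrightarrow> F \<in> CXV s \<Longrightarrow> TV s F \<in> bop s"
  using tv_diag_bounded[of F s]
  by (auto intro!: bop_diagonal simp: TV_eq split: if_splits)

lemma infsum_single_nonzero:
  fixes f :: "'a \<Rightarrow> complex"
  assumes "\<And>u. u \<noteq> u0 \<Longrightarrow> f u = 0"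
  shows "(\<Sum>\<^sub>\<infinity>u. f u) = f u0"
proof -
  have "infsum f UNIV = infsum f {u0}"
    by (rule infsum_cong_neutral) (use assms in auto)
  then show ?thesis by simp
qed

definition pair_add :: "_ \<Rightarrow> _ \<Rightarrow> ((nat \<Rightarrow> nat) \<Rightarrow> complex) \<times> (nat \<Rightarrow> complex)" where
  "pair_add F G = (\<lambda>a. fst F a + fst G a, \<lambda>n. snd F n + snd G n)"

definition pair_mult :: "_ \<Rightarrow> _ \<Rightarrow> ((nat \<Rightarrow> nat) \<Rightarrow> complex) \<times> (nat \<Rightarrow> complex)" where
  "pair_mult F G = (\<lambda>a. fst F a * fst G a, \<lambda>n. snd F n * snd G n)"

definition pair_scale :: "complex \<Rightarrow> _ \<Rightarrow> ((nat \<Rightarrow> nat) \<Rightarrow> complex) \<times> (nat \<Rightarrow> complex)" where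
  "pair_scale c F = (\<lambda>a. c * fst F a, \<lambda>n. c * snd F n)"

definition pair_cnj :: "_ \<Rightarrow> ((nat \<Rightarrow> nat) \<Rightarrow> complex) \<times> (nat \<Rightarrow> complex)" where
  "pair_cnj F = (\<lambda>a. cnj (fst F a), \<lambda>n. cnj (snd F n))"

lemma CXV_pair_add: "F \<in> CXV s \<Longrightarrow> G \<in> CXV s \<Longrightarrow> pair_add F G \<in> CXV s"
  by (auto simp: CXV_iff pair_add_def intro: continuous_on_add tendsto_add)

lemma CXV_pair_mult: "F \<in> CXV s \<Longrightarrow> G \<in> CXV s \<Longrightarrow> pair_mult F G \<in> CXV s"
  by (auto simp: CXV_iff pair_mult_def intro: continuous_on_mult tendsto_mult)

lemma CXV_pair_scale: "F \<in> CXV s \<Longrightarrow> pair_scale c F \<in> CXV s"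
  by (auto simp: CXV_iff pair_scale_def intro: continuous_on_mult continuous_on_const tendsto_mult)

lemma CXV_pair_cnj: "F \<in> CXV s \<Longrightarrow> pair_cnj F \<in> CXV s"
  by (auto simp: CXV_iff pair_cnj_def intro: continuous_on_cnj tendsto_cnj)

lemma CXV_zero: "(\<lambda>a. 0, \<lambda>n. 0) \<in> CXV s"
  by (simp add: CXV_iff)

lemma TV_pair_add: "s > 0 \<Longrightarrow> TV s (pair_add F G) = madd (TV s F) (TV s G)"
  by (auto simp: fun_eq_iff TV_eq madd_def tv_diag_def pair_add_def)

lemma TV_pair_scale: "s > 0 \<Longrightarrow> TV s (pair_scale c F) = mscale c (TV s F)"
  by (auto simp: fun_eq_iff TV_eq mscale_def tv_diag_def pair_scale_def)

lemma TV_pair_cnj: "s > 0 \<Longrightarrow> TV s (pair_cnj F) = madj (TV s F)"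
  by (auto simp: fun_eq_iff TV_eq madj_def tv_diag_def pair_cnj_def)

lemma TV_pair_mult:
  assumes s: "s > 0" shows "TV s (pair_mult F G) = mmult (TV s F) (TV s G)"
proof (intro ext)
  fix v w
  have "mmult (TV s F) (TV s G) v w = TV s F v v * TV s G v w"
    unfolding mmult_def by (rule infsum_single_nonzero) (simp add: TV_eq[OF s])
  then show "TV s (pair_mult F G) v w = mmult (TV s F) (TV s G) v w"
    by (auto simp: TV_eq[OF s] tv_diag_def pair_mult_def)
qed

lemma TV_zero: "s > 0 \<Longrightarrow> TV s (\<lambda>a. 0, \<lambda>n. 0) = mzero"
  by (auto simp: fun_eq_iff TV_eq mzero_def tv_diag_def)

lemma Mop_eq_TV: "s > 0 \<Longrightarrow> Mop s f = TV s (f, \<lambda>n. f (sdigits s 0))"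
  by (auto simp: fun_eq_iff TV_eq Mop_def tv_diag_def sdigits_zero)

lemma CXV_const_sequence: "f \<in> CZs s \<Longrightarrow> (f, \<lambda>n. f (sdigits s 0)) \<in> CXV s"
  by (simp add: CXV_def)

lemma Pn_eq_TV: "s > 0 \<Longrightarrow> Pn s n = TV s (\<lambda>a. 0, \<lambda>m. if m = n then 1 else 0)"
  using Vset_level_zero[of s n] by (auto simp: fun_eq_iff TV_eq Pn_def tv_diag_def)

lemma CXV_indicator_sequence: "(\<lambda>a. 0, \<lambda>m. if m = n then 1 else 0) \<in> CXV s"
proof -
  have "(\<lambda>m. if m = n then 1 else 0 :: complex) \<longlonglongrightarrow> 0"
    by (rule tendsto_eventually) (auto simp: eventually_sequentially intro!: exI[of _ "Suc n"])
  then show ?thesis by (simp add: CXV_iff)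
qed

definition TV_partial :: "nat \<Rightarrow> ((nat \<Rightarrow> nat) \<Rightarrow> complex) \<times> (nat \<Rightarrow> complex) \<Rightarrow> nat \<Rightarrow> mat" where
  "TV_partial s F N =
     madd (\<lambda>v w. \<Sum>n<N. mscale (snd F n - fst F (sdigits s 0)) (Pn s n) v w) (Mop s (fst F))"

lemma TV_minus_partial:
  assumes s: "s > 0"
  shows "mdiff (TV s F) (TV_partial s F N) v w
    = (if v = w \<and> snd v = 0 \<and> N \<le> fst v then snd F (fst v) - fst F (sdigits s 0) else 0)"
proof -
  define c where "c = (if v = w \<and> snd v = 0 then snd F (fst v) - fst F (sdigits s 0) else 0)"
  have "(\<Sum>n<N. mscale (snd F n - fst F (sdigits s 0)) (Pn s n) v w)
      = (\<Sum>n<N. if n = fst v then c else 0)"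
    unfolding c_def mscale_def Pn_def by (rule sum.cong) (auto simp: prod_eq_iff)
  also have "\<dots> = (if fst v < N then c else 0)" by simp
  finally show ?thesis
    unfolding mdiff_def TV_partial_def madd_def TV_eq[OF s] c_def Mop_def tv_diag_def
    using Vset_level_zero[OF s] by (cases v; cases w) (auto simp: sdigits_zero)
qed

lemma TV_partial_tendsto:
  assumes s: "s > 0" and F: "F \<in> CXV s"
  shows "(\<lambda>N. opnorm (mdiff (TV s F) (TV_partial s F N))) \<longlonglongrightarrow> 0"
proof -
  have bound: "mbound (mdiff (TV s F) (TV_partial s F N)) e"
    if "e \<ge> 0" "\<And>n. n \<ge> N \<Longrightarrow> cmod (snd F n - fst F (sdigits s 0)) \<le> e" for N e
    using that by (intro mbound_diagonal) (auto simp: TV_minus_partial[OF s] split: if_splits)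
  have "(\<lambda>n. snd F n - fst F (sdigits s 0)) \<longlonglongrightarrow> 0" using F by (simp add: CXV_iff LIM_zero)
  then have "bounded (range (\<lambda>n. snd F n - fst F (sdigits s 0)))"
    by (rule convergent_imp_bounded)
  then obtain e0 where "\<And>n. cmod (snd F n - fst F (sdigits s 0)) \<le> e0"
    unfolding bounded_iff by blast
  then have "mbound (mdiff (TV s F) (TV_partial s F N)) \<bar>e0\<bar>" for N
    by (intro bound) (auto intro: order_trans[OF _ abs_ge_self])
  then have nonneg: "opnorm (mdiff (TV s F) (TV_partial s F N)) \<ge> 0" for N
    by (rule opnorm_nonneg)
  show ?thesis
  proof (rule LIMSEQ_I)
    fix r :: real assume r: "r > 0"
    obtain N0 where N0: "\<forall>n\<ge>N0. dist (snd F n) (fst F (sdigits s 0)) < r / 2"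
      using F r unfolding CXV_iff lim_sequentially by (meson half_gt_zero)
    have "opnorm (mdiff (TV s F) (TV_partial s F N)) \<le> r / 2" if "N \<ge> N0" for N
      using r N0 that by (intro opnorm_le bound) (auto simp: dist_norm less_imp_le)
    then have "norm (opnorm (mdiff (TV s F) (TV_partial s F N)) - 0) < r" if "N \<ge> N0" for N
      using nonneg[of N] r that by fastforce
    then show "\<exists>no. \<forall>n\<ge>no. norm (opnorm (mdiff (TV s F) (TV_partial s F n)) - 0) < r" by blast
  qed
qed

section \<open>The image of \<open>T\<^sub>V\<close> is \<open>B\<^sub>V\<close>\<close>

lemma cstar_genI: "(\<And>A. cstar_closed s A \<Longrightarrow> G \<subseteq> A \<Longrightarrow> T \<in> A) \<Longrightarrow> T \<in> cstar_gen s G"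
  unfolding cstar_gen_def by blast

lemma cstar_gen_least: "cstar_closed s A \<Longrightarrow> G \<subseteq> A \<Longrightarrow> cstar_gen s G \<subseteq> A"
  unfolding cstar_gen_def by blast

lemma
  assumes "cstar_closed s A"
  shows cstar_closed_bop: "A \<subseteq> bop s"
    and cstar_closed_zero: "mzero \<in> A"
    and cstar_closed_add: "S \<in> A \<Longrightarrow> T \<in> A \<Longrightarrow> madd S T \<in> A"
    and cstar_closed_mult: "S \<in> A \<Longrightarrow> T \<in> A \<Longrightarrow> mmult S T \<in> A"
    and cstar_closed_scale: "T \<in> A \<Longrightarrow> mscale c T \<in> A"
    and cstar_closed_adj: "T \<in> A \<Longrightarrow> madj T \<in> A"
    and cstar_closed_limit:
      "(\<And>k. X k \<in> A) \<Longrightarrow> T \<in> bop s \<Longrightarrow> (\<lambda>k. opnorm (mdiff (X k) T)) \<longlonglongrightarrow> 0 \<Longrightarrow> T \<in> A"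
  using assms unfolding cstar_closed_def by blast+

lemma TV_in_BV:
  assumes s: "s > 0" and F: "F \<in> CXV s"
  shows "TV s F \<in> BV s"
  unfolding BV_def
proof (rule cstar_genI)
  fix A assume A: "cstar_closed s A" and G: "Mop s ` CZs s \<union> range (Pn s) \<subseteq> A"
  have sums: "(\<lambda>v w. \<Sum>n<N. mscale (snd F n - fst F (sdigits s 0)) (Pn s n) v w) \<in> A" for N
  proof (induction N)
    case 0 then show ?case using cstar_closed_zero[OF A] by (simp add: mzero_def)
  next
    case (Suc N)
    have "Pn s N \<in> A" using G by auto
    then show ?case
      using cstar_closed_add[OF A Suc.IH cstar_closed_scale[OF A]]
      by (simp add: madd_def)
  qed
  have "fst F \<in> CZs s" using F by (cases F) (auto simp: CXV_def)
  then have partial: "TV_partial s F N \<in> A" for N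
    unfolding TV_partial_def using sums cstar_closed_add[OF A] G by blast
  show "TV s F \<in> A"
  proof (rule cstar_closed_limit[OF A partial TV_bop[OF s F]])
    have "opnorm (mdiff (TV_partial s F N) (TV s F)) = opnorm (mdiff (TV s F) (TV_partial s F N))"
      for N
      using opnorm_diff_commute partial cstar_closed_bop[OF A] TV_bop[OF s F] by blast
    then show "(\<lambda>N. opnorm (mdiff (TV_partial s F N) (TV s F))) \<longlonglongrightarrow> 0"
      using TV_partial_tendsto[OF s F] by simp
  qed
qed

lemma diagonal_in_Vset:
  assumes "s \<ge> 2" shows "(x, x) \<in> Vset s"
proof -
  have "x < s ^ x" using less_exp[of x] power_mono[of 2 s x] assms by linarith
  then show ?thesis by (simp add: Vset_def)
qed

lemma TV_inj_on:
  assumes s: "s \<ge> 2" shows "inj_on (TV s) (CXV s)"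
proof (rule inj_onI)
  fix F G assume F: "F \<in> CXV s" and G: "G \<in> CXV s" and eq: "TV s F = TV s G"
  have "s > 0" using s by simp
  have d: "tv_diag s F v = tv_diag s G v" if "v \<in> Vset s" for v
    using fun_cong[OF fun_cong[OF eq, of v], of v] that by (simp add: TV_eq[OF \<open>s > 0\<close>])
  have "snd F n = snd G n" for n
    using d[of "(n,0)"] Vset_level_zero[OF \<open>s > 0\<close>] by (simp add: tv_diag_def)
  moreover have "fst F a = fst G a" for a
  proof (cases "a \<in> Zs s")
    case True
    show ?thesis
    proof (rule eq_if_eq_on_positive_ints[OF \<open>s > 0\<close> _ _ _ True])
      show "continuous_on (Zs s) (fst F)" "continuous_on (Zs s) (fst G)" using F G
        by (auto simp: CXV_iff)
      show "fst F (sdigits s x) = fst G (sdigits s x)" if "x \<ge> 1" for x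
        using d[OF diagonal_in_Vset[OF s, of x]] that by (simp add: tv_diag_def)
    qed
  next
    case False then show ?thesis using F G by (auto simp: CXV_iff)
  qed
  ultimately show "F = G" by (simp add: prod_eq_iff fun_eq_iff)
qed

lemma eq_0_if_norm_le_null:
  fixes c :: complex
  assumes "\<And>k. cmod c \<le> B * \<epsilon> k" "\<epsilon> \<longlonglongrightarrow> 0"
  shows "c = 0"
proof -
  have "(\<lambda>k. B * \<epsilon> k) \<longlonglongrightarrow> B * 0" by (intro tendsto_mult tendsto_const assms(2))
  then have "cmod c \<le> 0" using assms(1) by (intro tendsto_lowerbound[of "\<lambda>k. B * \<epsilon> k"]) auto
  then show ?thesis by simp
qed

lemma uniform_Cauchy_limit:
  fixes f :: "nat \<Rightarrow> 'a \<Rightarrow> complex"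
  assumes cauchy: "\<And>k m a. cmod (f k a - f m a) \<le> \<epsilon> k + \<epsilon> m" and \<epsilon>: "\<epsilon> \<longlonglongrightarrow> 0"
  obtains g where "\<And>k a. cmod (f k a - g a) \<le> \<epsilon> k"
proof
  fix k a
  have "Cauchy (\<lambda>k. f k a)"
  proof (rule metric_CauchyI)
    fix r :: real assume "r > 0"
    then obtain K where K: "\<forall>k\<ge>K. \<epsilon> k < r / 2"
      using order_tendstoD(2)[OF \<epsilon>, of "r/2"] by (auto simp: eventually_sequentially)
    have "dist (f m a) (f n a) < r" if "m \<ge> K" "n \<ge> K" for m n
    proof -
      have "\<epsilon> m < r / 2" "\<epsilon> n < r / 2" using K that by auto
      then show ?thesis using cauchy[of m a n] by (simp add: dist_norm)
    qed
    then show "\<exists>M. \<forall>m\<ge>M. \<forall>n\<ge>M. dist (f m a) (f n a) < r" by blast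
  qed
  then have "(\<lambda>m. f m a) \<longlonglongrightarrow> lim (\<lambda>m. f m a)"
    by (simp add: Cauchy_convergent_iff convergent_LIMSEQ_iff)
  then have "(\<lambda>m. cmod (f k a - f m a)) \<longlonglongrightarrow> cmod (f k a - lim (\<lambda>m. f m a))" by (intro tendsto_intros)
  moreover have "(\<lambda>m. \<epsilon> k + \<epsilon> m) \<longlonglongrightarrow> \<epsilon> k + 0" by (intro tendsto_intros \<epsilon>)
  ultimately show "cmod (f k a - lim (\<lambda>m. f m a)) \<le> \<epsilon> k"
    using cauchy by (intro LIMSEQ_le[where X="\<lambda>m. cmod (f k a - f m a)"]) auto
qed

lemma continuous_on_uniform_approx:
  fixes f :: "nat \<Rightarrow> 'a::topological_space \<Rightarrow> complex"
  assumes "\<And>k. continuous_on S (f k)" "\<And>k a. cmod (f k a - g a) \<le> \<epsilon> k" "\<epsilon> \<longlonglongrightarrow> 0"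
  shows "continuous_on S g"
proof (rule uniform_limit_theorem[where f=f and F=sequentially])
  show "uniform_limit S f g sequentially"
  proof (rule uniform_limitI)
    fix e :: real assume "e > 0"
    then have "eventually (\<lambda>k. \<epsilon> k < e) sequentially" using order_tendstoD(2)[OF assms(3)] by blast
    then show "\<forall>\<^sub>F k in sequentially. \<forall>x\<in>S. dist (f k x) (g x) < e"
      by eventually_elim (use assms(2) in \<open>auto simp: dist_norm intro: le_less_trans\<close>)
  qed
qed (use assms(1) in auto)

lemma tendsto_uniform_approx:
  fixes z :: "nat \<Rightarrow> complex"
  assumes y: "\<And>k. y k \<longlonglongrightarrow> L k" and zy: "\<And>k n. cmod (z n - y k n) \<le> \<epsilon> k"
    and L: "\<And>k. cmod (L k - L') \<le> \<epsilon> k" and \<epsilon>: "\<epsilon> \<longlonglongrightarrow> 0"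
  shows "z \<longlonglongrightarrow> L'"
proof (rule LIMSEQ_I)
  fix r :: real assume r: "r > 0"
  obtain k where k: "\<epsilon> k < r / 3"
    using order_tendstoD(2)[OF \<epsilon>, of "r/3"] r by (auto simp: eventually_sequentially)
  obtain N where N: "\<forall>n\<ge>N. norm (y k n - L k) < r / 3"
    using LIMSEQ_D[OF y[of k], of "r/3"] r by auto
  have "norm (z n - L') < r" if "n \<ge> N" for n
  proof -
    have "norm (z n - L') \<le> norm (z n - y k n + (y k n - L k)) + norm (L k - L')"
      using norm_triangle_ineq[of "z n - y k n + (y k n - L k)" "L k - L'"] by simp
    moreover have "norm (z n - y k n + (y k n - L k)) \<le> norm (z n - y k n) + norm (y k n - L k)"
      by (rule norm_triangle_ineq)
    ultimately show ?thesis using zy[where k=k and n=n] L[of k] N[rule_format, OF that] k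
      by linarith
  qed
  then show "\<exists>no. \<forall>n\<ge>no. norm (z n - L') < r" by blast
qed

lemma TV_diag_level_zero: "s > 0 \<Longrightarrow> TV s F (n, 0) (n, 0) = snd F n"
  using Vset_level_zero[of s n] by (simp add: TV_eq tv_diag_def)

lemma TV_diag_positive: "s > 0 \<Longrightarrow> v \<in> Vset s \<Longrightarrow> snd v \<noteq> 0 \<Longrightarrow> TV s F v v = fst F (sdigits s (snd v))"
  by (simp add: TV_eq tv_diag_def)

lemma norm_fst_diff_le_entrywise:
  assumes s: "s \<ge> 2" and F: "F \<in> CXV s" and G: "G \<in> CXV s"
    and e1: "\<And>v w. cmod (TV s F v w - T v w) \<le> e1" and e2: "\<And>v w. cmod (TV s G v w - T v w) \<le> e2"
  shows "cmod (fst F a - fst G a) \<le> e1 + e2"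
proof (cases "a \<in> Zs s")
  case True
  have "s > 0" using s by simp
  show ?thesis
  proof (rule norm_le_if_le_on_positive_ints[OF \<open>s > 0\<close> _ _ True])
    show "continuous_on (Zs s) (\<lambda>a. fst F a - fst G a)"
      using F G by (intro continuous_on_diff) (auto simp: CXV_iff)
    fix x :: nat assume "x \<ge> 1"
    then have "fst F (sdigits s x) - fst G (sdigits s x)
        = (TV s F (x,x) (x,x) - T (x,x) (x,x)) - (TV s G (x,x) (x,x) - T (x,x) (x,x))"
      using diagonal_in_Vset[OF s] by (simp add: TV_diag_positive[OF \<open>s > 0\<close>])
    also have "cmod \<dots> \<le> e1 + e2"
      by (rule order_trans[OF norm_triangle_ineq4 add_mono]) (rule e1, rule e2)
    finally show "cmod (fst F (sdigits s x) - fst G (sdigits s x)) \<le> e1 + e2" .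
  qed
next
  case False
  have "0 \<le> e1" "0 \<le> e2"
    by (rule order_trans[OF norm_ge_zero e1], rule order_trans[OF norm_ge_zero e2])
  then show ?thesis using False F G by (simp add: CXV_iff)
qed

lemma TV_eq_if_entrywise_limit:
  assumes s: "s > 0" and T: "T \<in> bop s" and \<epsilon>: "\<epsilon> \<longlonglongrightarrow> 0"
    and entry: "\<And>k v w. cmod (TV s (F k) v w - T v w) \<le> \<epsilon> k"
    and fst: "\<And>k a. cmod (fst (F k) a - fst G a) \<le> \<epsilon> k"
    and snd: "\<And>n. snd G n = T (n, 0) (n, 0)"
  shows "T = TV s G"
proof (intro ext)
  fix v w
  consider (outside) "v \<notin> Vset s \<or> w \<notin> Vset s" | (off) "v \<in> Vset s" "w \<in> Vset s" "v \<noteq> w"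
    | (level_zero) "v \<in> Vset s" "w = v" "snd v = 0" | (positive) "v \<in> Vset s" "w = v" "snd v \<noteq> 0"
    by blast
  then show "T v w = TV s G v w"
  proof cases
    case outside then show ?thesis using T
      by (auto simp: TV_eq[OF s] bop_row_outside bop_column_outside)
  next
    case off
    have "T v w = 0"
      by (rule eq_0_if_norm_le_null[of _ 1, OF _ \<epsilon>])
        (use entry[of _ v w] off in \<open>simp add: TV_eq[OF s]\<close>)
    then show ?thesis using off by (simp add: TV_eq[OF s])
  next
    case level_zero
    then show ?thesis using snd by (cases v) (simp add: TV_diag_level_zero[OF s])
  next
    case positive
    have "T v v - fst G (sdigits s (snd v)) = 0"
    proof (rule eq_0_if_norm_le_null[of _ 2, OF _ \<epsilon>])
      fix k
      have "T v v - fst G (sdigits s (snd v))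
          = (T v v - TV s (F k) v v) + (fst (F k) (sdigits s (snd v)) - fst G (sdigits s (snd v)))"
        using positive by (simp add: TV_diag_positive[OF s])
      also have "cmod \<dots> \<le> \<epsilon> k + \<epsilon> k"
        using entry[of k v v] fst[of k]
        by (intro order_trans[OF norm_triangle_ineq] add_mono) (auto simp: norm_minus_commute)
      finally show "cmod (T v v - fst G (sdigits s (snd v))) \<le> 2 * \<epsilon> k" by simp
    qed
    then show ?thesis using positive by (simp add: TV_diag_positive[OF s])
  qed
qed

lemma TV_image_limit:
  assumes s: "s \<ge> 2" and F: "\<And>k. F k \<in> CXV s" and T: "T \<in> bop s"
    and lim: "(\<lambda>k. opnorm (mdiff (TV s (F k)) T)) \<longlonglongrightarrow> 0"
  shows "T \<in> TV s ` CXV s"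
proof -
  have "s > 0" using s by simp
  define \<epsilon> where "\<epsilon> k = opnorm (mdiff (TV s (F k)) T)" for k
  have \<epsilon>: "\<epsilon> \<longlonglongrightarrow> 0" using lim unfolding \<epsilon>_def .
  have entry: "cmod (TV s (F k) v w - T v w) \<le> \<epsilon> k" for k v w
    using norm_entry_le_opnorm[OF bop_diff[OF TV_bop[OF \<open>s > 0\<close> F] T]] unfolding \<epsilon>_def mdiff_def .
  have "cmod (fst (F k) a - fst (F m) a) \<le> \<epsilon> k + \<epsilon> m" for k m a
    by (rule norm_fst_diff_le_entrywise[OF s F F entry entry])
  then obtain g where g: "\<And>k a. cmod (fst (F k) a - g a) \<le> \<epsilon> k"
    using uniform_Cauchy_limit[of "\<lambda>k. fst (F k)" \<epsilon>] \<epsilon> by blast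
  define z where "z n = T (n, 0) (n, 0)" for n
  have "(g, z) \<in> CXV s"
    unfolding CXV_iff fst_conv snd_conv
  proof (intro conjI allI impI)
    show "continuous_on (Zs s) g"
      by (rule continuous_on_uniform_approx[OF _ g \<epsilon>]) (use F in \<open>simp add: CXV_iff\<close>)
    show "g a = 0" if "a \<notin> Zs s" for a
      by (rule eq_0_if_norm_le_null[of _ 1, OF _ \<epsilon>]) (use g[of _ a] F that in \<open>simp add: CXV_iff\<close>)
    show "z \<longlonglongrightarrow> g (sdigits s 0)"
    proof (rule tendsto_uniform_approx[OF _ _ _ \<epsilon>])
      show "snd (F k) \<longlonglongrightarrow> fst (F k) (sdigits s 0)" for k using F by (simp add: CXV_iff)
      show "cmod (z n - snd (F k) n) \<le> \<epsilon> k" for k n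
        using entry[of k "(n,0)" "(n,0)"]
          by (simp add: z_def TV_diag_level_zero[OF \<open>s > 0\<close>] norm_minus_commute)
    qed (rule g)
  qed
  moreover have "T = TV s (g, z)"
    by (rule TV_eq_if_entrywise_limit[OF \<open>s > 0\<close> T \<epsilon> entry]) (simp_all add: g z_def)
  ultimately show ?thesis by blast
qed

lemma TV_image_cstar_closed:
  assumes s: "s \<ge> 2" shows "cstar_closed s (TV s ` CXV s)"
proof -
  have s0: "s > 0" using s by simp
  show ?thesis unfolding cstar_closed_def
  proof (intro conjI ballI allI impI)
    show "TV s ` CXV s \<subseteq> bop s" using TV_bop[OF s0] by blast
    show "mzero \<in> TV s ` CXV s"
      by (rule image_eqI[where x="(\<lambda>a. 0, \<lambda>n. 0)"]) (simp_all add: TV_zero[OF s0] CXV_zero)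
  next
    fix S T assume "S \<in> TV s ` CXV s" "T \<in> TV s ` CXV s"
    then obtain F G where F: "F \<in> CXV s" "S = TV s F" and G: "G \<in> CXV s" "T = TV s G" by blast
    show "madd S T \<in> TV s ` CXV s"
      unfolding F(2) G(2)
      by (rule image_eqI[where x="pair_add F G"])
        (simp_all add: TV_pair_add[OF s0] CXV_pair_add F(1) G(1))
    show "mmult S T \<in> TV s ` CXV s"
      unfolding F(2) G(2)
      by (rule image_eqI[where x="pair_mult F G"])
        (simp_all add: TV_pair_mult[OF s0] CXV_pair_mult F(1) G(1))
  next
    fix c T assume "T \<in> TV s ` CXV s"
    then obtain F where F: "F \<in> CXV s" "T = TV s F" by blast
    show "mscale c T \<in> TV s ` CXV s"
      unfolding F(2) by (rule image_eqI[where x="pair_scale c F"])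
        (simp_all add: TV_pair_scale[OF s0] CXV_pair_scale F(1))
    show "madj T \<in> TV s ` CXV s"
      unfolding F(2) by (rule image_eqI[where x="pair_cnj F"])
        (simp_all add: TV_pair_cnj[OF s0] CXV_pair_cnj F(1))
  next
    fix X T assume X: "\<forall>k. X k \<in> TV s ` CXV s" and T: "T \<in> bop s"
      and lim: "(\<lambda>k. opnorm (mdiff (X k) T)) \<longlonglongrightarrow> 0"
    obtain F where "\<forall>k. F k \<in> CXV s \<and> X k = TV s (F k)"
      using choice[of "\<lambda>k F. F \<in> CXV s \<and> X k = TV s F"] X by blast
    then have F: "\<And>k. F k \<in> CXV s" and XF: "\<And>k. X k = TV s (F k)" by auto
    show "T \<in> TV s ` CXV s"
      by (rule TV_image_limit[OF s F T]) (use lim in \<open>simp add: XF\<close>)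
  qed
qed

lemma BV_eq_TV_image:
  assumes s: "s \<ge> 2" shows "BV s = TV s ` CXV s"
proof
  have s0: "s > 0" using s by simp
  have "Mop s ` CZs s \<union> range (Pn s) \<subseteq> TV s ` CXV s"
    using Mop_eq_TV[OF s0] CXV_const_sequence Pn_eq_TV[OF s0] CXV_indicator_sequence by blast
  then show "BV s \<subseteq> TV s ` CXV s"
    unfolding BV_def by (rule cstar_gen_least[OF TV_image_cstar_closed[OF s]])
  show "TV s ` CXV s \<subseteq> BV s" using TV_in_BV[OF s0] by blast
qed

section \<open>Weighted shifts\<close>

text \<open>\<open>V\<^sup>k\<close> maps \<open>E\<^sub>v\<close> to \<open>E\<^bsub>shift_idx s k v\<^esub>\<close>; \<open>unshift_idx\<close> inverts this on the range.\<close>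

definition shift_idx :: "nat \<Rightarrow> nat \<Rightarrow> nat \<times> nat \<Rightarrow> nat \<times> nat" where
  "shift_idx s k v = (fst v + k, s ^ k * snd v)"

definition unshift_idx :: "nat \<Rightarrow> nat \<Rightarrow> nat \<times> nat \<Rightarrow> nat \<times> nat" where
  "unshift_idx s k v = (fst v - k, snd v div s ^ k)"

lemma shift_idx_0[simp]: "shift_idx s 0 v = v"
  by (simp add: shift_idx_def)

lemma shift_idx_add: "shift_idx s a (shift_idx s b v) = shift_idx s (a + b) v"
  by (simp add: shift_idx_def power_add algebra_simps)

lemma fst_shift_idx[simp]: "fst (shift_idx s k v) = fst v + k"
  by (simp add: shift_idx_def)

lemma snd_shift_idx[simp]: "snd (shift_idx s k v) = s ^ k * snd v"
  by (simp add: shift_idx_def)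

lemma shift_idx_inj: "s > 0 \<Longrightarrow> shift_idx s k v = shift_idx s k v' \<Longrightarrow> v = v'"
  by (simp add: shift_idx_def prod_eq_iff)

lemma shift_idx_Vset: "s > 0 \<Longrightarrow> v \<in> Vset s \<Longrightarrow> shift_idx s k v \<in> Vset s"
  by (simp add: Vset_iff power_add mult.commute)

lemma unshift_shift_idx[simp]: "s > 0 \<Longrightarrow> unshift_idx s k (shift_idx s k v) = v"
  by (simp add: shift_idx_def unshift_idx_def)

lemma shift_unshift_idx:
  "s > 0 \<Longrightarrow> k \<le> fst w \<Longrightarrow> s ^ k dvd snd w \<Longrightarrow> shift_idx s k (unshift_idx s k w) = w"
  by (simp add: shift_idx_def unshift_idx_def prod_eq_iff)

lemma unshift_idx_Vset:
  assumes s: "s > 0" and w: "w \<in> Vset s" and k: "k \<le> fst w" and d: "s ^ k dvd snd w"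
  shows "unshift_idx s k w \<in> Vset s"
proof -
  obtain q where q: "snd w = s ^ k * q" using d by blast
  have "s ^ k * q < s ^ k * s ^ (fst w - k)" using w q k
    by (simp add: Vset_iff power_add[symmetric])
  then have "q < s ^ (fst w - k)" by simp
  then show ?thesis using s q by (simp add: unshift_idx_def Vset_iff)
qed

lemma in_range_shift_idx_iff:
  assumes s: "s > 0"
  shows "(\<exists>u\<in>Vset s. w = shift_idx s k u) \<longleftrightarrow> (w \<in> Vset s \<and> k \<le> fst w \<and> s ^ k dvd snd w)"
proof
  assume "\<exists>u\<in>Vset s. w = shift_idx s k u"
  then obtain u where "u \<in> Vset s" "w = shift_idx s k u" by blast
  then show "w \<in> Vset s \<and> k \<le> fst w \<and> s ^ k dvd snd w" using shift_idx_Vset[OF s] by auto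
next
  assume a: "w \<in> Vset s \<and> k \<le> fst w \<and> s ^ k dvd snd w"
  then show "\<exists>u\<in>Vset s. w = shift_idx s k u" using unshift_idx_Vset[OF s] shift_unshift_idx[OF s]
    by metis
qed

definition prepend_zeros :: "nat \<Rightarrow> (nat \<Rightarrow> nat) \<Rightarrow> (nat \<Rightarrow> nat)" where
  "prepend_zeros l a = (\<lambda>k. if k < l then 0 else a (k - l))"

definition drop_digits :: "nat \<Rightarrow> (nat \<Rightarrow> nat) \<Rightarrow> (nat \<Rightarrow> nat)" where
  "drop_digits l a = (\<lambda>k. a (k + l))"

lemma sdigits_mult_power:
  assumes s: "s > 0" shows "sdigits s (s ^ l * x) = prepend_zeros l (sdigits s x)"
proof
  fix k
  show "sdigits s (s ^ l * x) k = prepend_zeros l (sdigits s x) k"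
  proof (cases "k < l")
    case True
    have e: "s ^ l = s ^ k * (s * s ^ (l - k - 1))"
    proof -
      have "l = k + (Suc (l - k - 1))" using True by simp
      then have "s ^ l = s ^ k * s ^ (Suc (l - k - 1))" by (metis power_add)
      then show ?thesis by simp
    qed
    have "s ^ l * x div s ^ k = s * (s ^ (l - k - 1) * x)"
      unfolding e using s by (simp add: mult.assoc)
    then show ?thesis using True by (simp add: sdigits_def prepend_zeros_def)
  next
    case False
    have e: "s ^ k = s ^ l * s ^ (k - l)" using False
      by (metis le_add_diff_inverse not_less power_add)
    have "s ^ l * x div s ^ k = x div s ^ (k - l)" unfolding e using s by simp
    then show ?thesis using False by (simp add: sdigits_def prepend_zeros_def)
  qed
qed

lemma sdigits_div_power: "sdigits s (x div s ^ l) = drop_digits l (sdigits s x)"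
proof
  fix k
  have "x div s ^ l div s ^ k = x div (s ^ l * s ^ k)" by (rule div_mult2_eq[symmetric])
  also have "s ^ l * s ^ k = s ^ (k + l)" by (simp add: power_add)
  finally show "sdigits s (x div s ^ l) k = drop_digits l (sdigits s x) k"
    by (simp add: sdigits_def drop_digits_def)
qed

lemma power_dvd_iff_sdigits:
  assumes s: "s > 0" shows "(s ^ l dvd x) \<longleftrightarrow> (\<forall>k<l. sdigits s x k = 0)"
proof (induction l)
  case 0 then show ?case by simp
next
  case (Suc l)
  have m: "x mod (s ^ l * s) = s ^ l * (x div s ^ l mod s) + x mod s ^ l" by (rule mod_mult2_eq)
  have "s ^ Suc l dvd x \<longleftrightarrow> x mod (s ^ l * s) = 0" by (simp only: dvd_eq_mod_eq_0 power_Suc2)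
  also have "\<dots> \<longleftrightarrow> x div s ^ l mod s = 0 \<and> x mod s ^ l = 0" unfolding m using s by simp
  also have "\<dots> \<longleftrightarrow> (\<forall>k<Suc l. sdigits s x k = 0)"
    using Suc by (auto simp: dvd_eq_mod_eq_0 sdigits_def less_Suc_eq)
  finally show ?case .
qed

lemma prepend_zeros_Zs: "s > 0 \<Longrightarrow> a \<in> Zs s \<Longrightarrow> prepend_zeros l a \<in> Zs s"
  by (simp add: Zs_def prepend_zeros_def)

lemma drop_digits_Zs: "a \<in> Zs s \<Longrightarrow> drop_digits l a \<in> Zs s"
  by (simp add: Zs_def drop_digits_def)

lemma continuous_on_digit: "continuous_on S (\<lambda>a::nat\<Rightarrow>nat. a i)"
  by (rule continuous_on_subset[OF continuous_on_product_coordinates]) simp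

lemma continuous_on_digit_comp:
  "continuous_on S (\<lambda>a::nat\<Rightarrow>nat. (g :: nat \<Rightarrow> 'b::topological_space) (a i))"
  by (rule continuous_on_compose2[OF Topological_Spaces.continuous_on_discrete continuous_on_digit,
        where t=UNIV]) auto

lemma continuous_on_prepend_zeros: "continuous_on S (prepend_zeros l)"
proof (rule continuous_on_coordinatewise_then_product)
  fix k show "continuous_on S (\<lambda>a. prepend_zeros l a k)"
    by (cases "k < l") (simp_all add: prepend_zeros_def continuous_on_digit)
qed

lemma continuous_on_drop_digits: "continuous_on S (drop_digits l)"
  by (rule continuous_on_coordinatewise_then_product)
    (simp add: drop_digits_def continuous_on_digit)

definition TV_diags :: "nat \<Rightarrow> (nat \<times> nat \<Rightarrow> complex) set" where
  "TV_diags s = {d. \<exists>F\<in>CXV s. \<forall>v\<in>Vset s. d v = tv_diag s F v}"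

lemma TV_diags_bounded: "d \<in> TV_diags s \<Longrightarrow> \<exists>B\<ge>0. \<forall>v\<in>Vset s. cmod (d v) \<le> B"
  unfolding TV_diags_def using tv_diag_bounded by fastforce

lemma tv_diag_pair_mult: "tv_diag s (pair_mult F G) v = tv_diag s F v * tv_diag s G v"
  by (simp add: tv_diag_def pair_mult_def)

lemma tv_diag_pair_scale: "tv_diag s (pair_scale c F) v = c * tv_diag s F v"
  by (simp add: tv_diag_def pair_scale_def)

lemma tv_diag_pair_cnj: "tv_diag s (pair_cnj F) v = cnj (tv_diag s F v)"
  by (simp add: tv_diag_def pair_cnj_def)

lemma TV_diags_mult:
  assumes "d \<in> TV_diags s" "e \<in> TV_diags s" shows "(\<lambda>v. d v * e v) \<in> TV_diags s"
proof -
  obtain F G where "F \<in> CXV s" "\<forall>v\<in>Vset s. d v = tv_diag s F v"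
    and "G \<in> CXV s" "\<forall>v\<in>Vset s. e v = tv_diag s G v"
    using assms unfolding TV_diags_def by blast
  then show ?thesis unfolding TV_diags_def
    by (intro CollectI bexI[of _ "pair_mult F G"] CXV_pair_mult) (simp_all add: tv_diag_pair_mult)
qed

lemma TV_diags_scale:
  assumes "d \<in> TV_diags s" shows "(\<lambda>v. c * d v) \<in> TV_diags s"
proof -
  obtain F where "F \<in> CXV s" "\<forall>v\<in>Vset s. d v = tv_diag s F v"
    using assms unfolding TV_diags_def by blast
  then show ?thesis unfolding TV_diags_def
    by (intro CollectI bexI[of _ "pair_scale c F"] CXV_pair_scale) (simp_all add: tv_diag_pair_scale)
qed

lemma TV_diags_cnj:
  assumes "d \<in> TV_diags s" shows "(\<lambda>v. cnj (d v)) \<in> TV_diags s"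
proof -
  obtain F where "F \<in> CXV s" "\<forall>v\<in>Vset s. d v = tv_diag s F v"
    using assms unfolding TV_diags_def by blast
  then show ?thesis unfolding TV_diags_def
    by (intro CollectI bexI[of _ "pair_cnj F"] CXV_pair_cnj) (simp_all add: tv_diag_pair_cnj)
qed

lemma TV_diags_zero: "(\<lambda>v. 0) \<in> TV_diags s"
  unfolding TV_diags_def by (auto intro!: bexI[OF _ CXV_zero] simp: tv_diag_def)

lemma TV_diags_one:
  assumes s: "s > 0" shows "(\<lambda>v. 1) \<in> TV_diags s"
proof -
  define F where "F = ((\<lambda>a. if a \<in> Zs s then 1 else 0) :: (nat \<Rightarrow> nat) \<Rightarrow> complex,
    (\<lambda>n. 1) :: nat \<Rightarrow> complex)"
  have "F \<in> CXV s"
  proof (rule CXVI)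
    show "continuous_on (Zs s) (fst F)" unfolding F_def
      by (rule continuous_on_cong[THEN iffD1, OF refl _ continuous_on_const[of _ 1]]) auto
  qed (use sdigits_in_Zs[OF s] in \<open>auto simp: F_def\<close>)
  moreover have "\<forall>v\<in>Vset s. 1 = tv_diag s F v" using sdigits_in_Zs[OF s]
    by (auto simp: F_def tv_diag_def)
  ultimately show ?thesis unfolding TV_diags_def by blast
qed

lemma TV_diags_Mop:
  assumes "f \<in> CZs s" shows "(\<lambda>v. f (sdigits s (snd v))) \<in> TV_diags s"
  unfolding TV_diags_def using CXV_const_sequence[OF assms]
  by (auto intro!: bexI[of _ "(f, \<lambda>n. f (sdigits s 0))"] simp: tv_diag_def sdigits_zero)

lemma TV_diags_shift_idx:
  assumes s: "s > 0" and d: "d \<in> TV_diags s" shows "(\<lambda>v. d (shift_idx s l v)) \<in> TV_diags s"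
proof -
  obtain F where F: "F \<in> CXV s" and dF: "\<forall>v\<in>Vset s. d v = tv_diag s F v" using d
    unfolding TV_diags_def by blast
  define G where "G = ((\<lambda>a. if a \<in> Zs s then fst F (prepend_zeros l a) else 0),
    (\<lambda>n. snd F (n + l)))"
  have G: "G \<in> CXV s"
  proof (rule CXVI)
    have "continuous_on (Zs s) (\<lambda>a. fst F (prepend_zeros l a))"
      using F[unfolded CXV_iff] prepend_zeros_Zs[OF s]
        by (intro continuous_on_compose2[OF _ continuous_on_prepend_zeros]) auto
    then show "continuous_on (Zs s) (fst G)" unfolding G_def
      by (rule continuous_on_cong[THEN iffD1, OF refl, rotated]) auto
    have "prepend_zeros l (sdigits s 0) = sdigits s 0" by (simp add: prepend_zeros_def sdigits_zero)
    then show "snd G \<longlonglongrightarrow> fst G (sdigits s 0)"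
      unfolding G_def using F[unfolded CXV_iff] sdigits_in_Zs[OF s]
        by (auto intro: LIMSEQ_ignore_initial_segment)
  qed (simp add: G_def)
  have "d (shift_idx s l v) = tv_diag s G v" if v: "v \<in> Vset s" for v
  proof -
    have "d (shift_idx s l v) = tv_diag s F (shift_idx s l v)" using dF shift_idx_Vset[OF s v]
      by blast
    also have "\<dots> = tv_diag s G v" using s sdigits_in_Zs[OF s]
      by (simp add: tv_diag_def G_def sdigits_mult_power add.commute prepend_zeros_Zs)
    finally show ?thesis .
  qed
  then show ?thesis unfolding TV_diags_def using G by blast
qed

text \<open>The diagonal of \<open>V\<^sup>l M\<^sub>D V\<^sup>*\<^sup>l\<close>.\<close>

definition pushforward :: "nat \<Rightarrow> nat \<Rightarrow> (nat \<times> nat \<Rightarrow> complex) \<Rightarrow> (nat \<times> nat \<Rightarrow> complex)" where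
  "pushforward s l D w = (if l \<le> fst w \<and> s ^ l dvd snd w then D (unshift_idx s l w) else 0)"

definition zero_prefix_indicator :: "nat \<Rightarrow> (nat \<Rightarrow> nat) \<Rightarrow> complex" where
  "zero_prefix_indicator l a = (if \<forall>k<l. a k = 0 then 1 else 0)"

lemma continuous_on_zero_prefix_indicator: "continuous_on S (zero_prefix_indicator l)"
proof -
  have "zero_prefix_indicator l = (\<lambda>a. \<Prod>k<l. if a k = 0 then 1 else 0)"
    unfolding zero_prefix_indicator_def by (induction l) (auto simp: fun_eq_iff less_Suc_eq)
  moreover have "continuous_on S (\<lambda>a::nat\<Rightarrow>nat. if a k = 0 then 1 else (0::complex))" for k
    using continuous_on_digit_comp[of S "\<lambda>n. if n = 0 then 1 else (0::complex)" k] by simp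
  ultimately show ?thesis by (simp add: continuous_on_prod)
qed

lemma CXV_pushforward_pair:
  assumes s: "s > 0" and F: "F \<in> CXV s"
  shows "(\<lambda>a. if a \<in> Zs s then zero_prefix_indicator l a * fst F (drop_digits l a) else 0,
          \<lambda>n. if l \<le> n then snd F (n - l) else 0) \<in> CXV s" (is "?G \<in> _")
proof (rule CXVI)
  have "continuous_on (Zs s) (\<lambda>a. fst F (drop_digits l a))"
    using F[unfolded CXV_iff] drop_digits_Zs
    by (intro continuous_on_compose2[OF _ continuous_on_drop_digits]) auto
  then have "continuous_on (Zs s) (\<lambda>a. zero_prefix_indicator l a * fst F (drop_digits l a))"
    by (intro continuous_on_mult continuous_on_zero_prefix_indicator)
  then show "continuous_on (Zs s) (fst ?G)"
    by (rule continuous_on_cong[THEN iffD1, OF refl, rotated]) auto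
  have eq: "fst ?G (sdigits s 0) = fst F (sdigits s 0)"
    using s by (simp add: zero_prefix_indicator_def sdigits_zero drop_digits_def Zs_def)
  have "(\<lambda>n. snd ?G (n + l)) \<longlonglongrightarrow> fst ?G (sdigits s 0)"
    unfolding eq using F by (simp add: CXV_iff)
  then show "snd ?G \<longlonglongrightarrow> fst ?G (sdigits s 0)" by (rule LIMSEQ_offset)
qed simp

lemma TV_diags_pushforward:
  assumes s: "s > 0" and d: "d \<in> TV_diags s" shows "pushforward s l d \<in> TV_diags s"
proof -
  obtain F where F: "F \<in> CXV s" and dF: "\<forall>v\<in>Vset s. d v = tv_diag s F v"
    using d unfolding TV_diags_def by blast
  define G where "G = (\<lambda>a. if a \<in> Zs s then zero_prefix_indicator l a * fst F (drop_digits l a) else 0,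
    \<lambda>n. if l \<le> n then snd F (n - l) else 0)"
  have G: "G \<in> CXV s" unfolding G_def by (rule CXV_pushforward_pair[OF s F])
  have "pushforward s l d v = tv_diag s G v" if v: "v \<in> Vset s" for v
  proof (cases "snd v = 0")
    case True
    then have "l \<le> fst v \<Longrightarrow> unshift_idx s l v \<in> Vset s" using unshift_idx_Vset[OF s v] by simp
    then show ?thesis using True dF
      by (auto simp: pushforward_def tv_diag_def G_def unshift_idx_def)
  next
    case False
    have sZ: "sdigits s (snd v) \<in> Zs s" by (rule sdigits_in_Zs[OF s])
    show ?thesis
    proof (cases "s ^ l dvd snd v")
      case dv: True
      then have "s ^ l \<le> snd v" using False by (simp add: dvd_imp_le)
      then have "s ^ l < s ^ fst v" using v by (simp add: Vset_iff)
      then have lf: "l \<le> fst v" using s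
        by (metis linorder_not_less nat_power_less_imp_less order.asym)
      have dV: "unshift_idx s l v \<in> Vset s" by (rule unshift_idx_Vset[OF s v lf dv])
      have nz: "snd v div s ^ l \<noteq> 0" using dv False by auto
      have "pushforward s l d v = tv_diag s F (unshift_idx s l v)" using lf dv dF dV
        by (simp add: pushforward_def)
      also have "\<dots> = fst F (drop_digits l (sdigits s (snd v)))" using nz
        by (simp add: tv_diag_def unshift_idx_def sdigits_div_power)
      also have "\<dots> = tv_diag s G v" using False dv sZ power_dvd_iff_sdigits[OF s]
        by (simp add: tv_diag_def G_def zero_prefix_indicator_def)
      finally show ?thesis .
    next
      case ndv: False
      then show ?thesis using False sZ power_dvd_iff_sdigits[OF s, of l "snd v"]
        by (auto simp: pushforward_def tv_diag_def G_def zero_prefix_indicator_def)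
    qed
  qed
  then show ?thesis unfolding TV_diags_def using G by blast
qed

text \<open>\<open>shift_op s k d = V\<^sup>k M\<^sub>d\<close> and \<open>shift_op_adj s k d = M\<^sub>d V\<^sup>*\<^sup>k\<close> for a diagonal \<open>d\<close>.\<close>

definition shift_op :: "nat \<Rightarrow> nat \<Rightarrow> (nat \<times> nat \<Rightarrow> complex) \<Rightarrow> mat" where
  "shift_op s k d = (\<lambda>v w. if w \<in> Vset s \<and> v = shift_idx s k w then d w else 0)"

definition shift_op_adj :: "nat \<Rightarrow> nat \<Rightarrow> (nat \<times> nat \<Rightarrow> complex) \<Rightarrow> mat" where
  "shift_op_adj s k d = (\<lambda>v w. if v \<in> Vset s \<and> w = shift_idx s k v then d v else 0)"

lemma shift_op_mult_shift_op:
  assumes s: "s > 0"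
  shows "mmult (shift_op s j d) (shift_op s l e) = shift_op s (j + l) (\<lambda>w. d (shift_idx s l w) * e w)"
proof (intro ext)
  fix v w
  have "mmult (shift_op s j d) (shift_op s l e) v w = shift_op s j d v (shift_idx s l w)
      * shift_op s l e (shift_idx s l w) w"
    unfolding mmult_def by (rule infsum_single_nonzero) (auto simp: shift_op_def)
  then show "mmult (shift_op s j d) (shift_op s l e) v w
      = shift_op s (j + l) (\<lambda>w. d (shift_idx s l w) * e w) v w"
    using shift_idx_Vset[OF s] by (auto simp: shift_op_def shift_idx_add add.commute)
qed

lemma shift_op_adj_mult_shift_op_adj:
  assumes s: "s > 0"
  shows "mmult (shift_op_adj s j d) (shift_op_adj s l e)
      = shift_op_adj s (j + l) (\<lambda>v. d v * e (shift_idx s j v))"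
proof (intro ext)
  fix v w
  have "mmult (shift_op_adj s j d) (shift_op_adj s l e) v w = shift_op_adj s j d v (shift_idx s j v)
      * shift_op_adj s l e (shift_idx s j v) w"
    unfolding mmult_def by (rule infsum_single_nonzero) (auto simp: shift_op_adj_def)
  then show "mmult (shift_op_adj s j d) (shift_op_adj s l e) v w
      = shift_op_adj s (j + l) (\<lambda>v. d v * e (shift_idx s j v)) v w"
    using shift_idx_Vset[OF s] by (auto simp: shift_op_adj_def shift_idx_add add.commute)
qed

lemma shift_op_mult_shift_op_adj_ge:
  assumes s: "s > 0" and jl: "l \<le> j"
  shows "mmult (shift_op s j d) (shift_op_adj s l e)
      = shift_op s (j - l) (pushforward s l (\<lambda>u. d u * e u))"
proof (intro ext)
  fix v w
  have "mmult (shift_op s j d) (shift_op_adj s l e) v w = shift_op s j d v (unshift_idx s l w)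
      * shift_op_adj s l e (unshift_idx s l w) w"
    unfolding mmult_def by (rule infsum_single_nonzero) (auto simp: shift_op_adj_def s)
  also have "\<dots> = shift_op s (j - l) (pushforward s l (\<lambda>u. d u * e u)) v w"
  proof (cases "w \<in> Vset s \<and> l \<le> fst w \<and> s ^ l dvd snd w")
    case True
    then have dV: "unshift_idx s l w \<in> Vset s" and ud: "shift_idx s l (unshift_idx s l w) = w"
      using unshift_idx_Vset[OF s] shift_unshift_idx[OF s] by auto
    have "shift_idx s j (unshift_idx s l w) = shift_idx s (j - l) w" using ud jl
      by (metis shift_idx_add le_add_diff_inverse2)
    then show ?thesis using True dV ud by (simp add: shift_op_def shift_op_adj_def pushforward_def)
  next
    case False
    have "\<not> (\<exists>u\<in>Vset s. w = shift_idx s l u)" using False in_range_shift_idx_iff[OF s] by blast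
    then have "\<not> (unshift_idx s l w \<in> Vset s \<and> w = shift_idx s l (unshift_idx s l w))" by blast
    then show ?thesis using False by (auto simp: shift_op_def shift_op_adj_def pushforward_def)
  qed
  finally show "mmult (shift_op s j d) (shift_op_adj s l e) v w
      = shift_op s (j - l) (pushforward s l (\<lambda>u. d u * e u)) v w" .
qed

lemma shift_op_mult_shift_op_adj_less:
  assumes s: "s > 0" and jl: "j < l"
  shows "mmult (shift_op s j d) (shift_op_adj s l e)
      = shift_op_adj s (l - j) (pushforward s j (\<lambda>u. d u * e u))"
proof (intro ext)
  fix v w
  have "mmult (shift_op s j d) (shift_op_adj s l e) v w = shift_op s j d v (unshift_idx s j v)
      * shift_op_adj s l e (unshift_idx s j v) w"
    unfolding mmult_def by (rule infsum_single_nonzero) (auto simp: shift_op_def s)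
  also have "\<dots> = shift_op_adj s (l - j) (pushforward s j (\<lambda>u. d u * e u)) v w"
  proof (cases "v \<in> Vset s \<and> j \<le> fst v \<and> s ^ j dvd snd v")
    case True
    then have dV: "unshift_idx s j v \<in> Vset s" and ud: "shift_idx s j (unshift_idx s j v) = v"
      using unshift_idx_Vset[OF s] shift_unshift_idx[OF s] by auto
    have "shift_idx s l (unshift_idx s j v) = shift_idx s (l - j) v" using ud jl
      by (metis shift_idx_add less_imp_le le_add_diff_inverse2)
    then show ?thesis using True dV ud by (simp add: shift_op_def shift_op_adj_def pushforward_def)
  next
    case False
    have "\<not> (\<exists>u\<in>Vset s. v = shift_idx s j u)" using False in_range_shift_idx_iff[OF s] by blast
    then have "\<not> (unshift_idx s j v \<in> Vset s \<and> v = shift_idx s j (unshift_idx s j v))" by blast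
    then show ?thesis using False by (auto simp: shift_op_def shift_op_adj_def pushforward_def)
  qed
  finally show "mmult (shift_op s j d) (shift_op_adj s l e) v w
      = shift_op_adj s (l - j) (pushforward s j (\<lambda>u. d u * e u)) v w" .
qed

lemma shift_op_adj_mult_shift_op_le:
  assumes s: "s > 0" and jl: "j \<le> l"
  shows "mmult (shift_op_adj s j d) (shift_op s l e)
      = shift_op s (l - j) (\<lambda>w. d (shift_idx s (l - j) w) * e w)"
proof (intro ext)
  fix v w
  have "mmult (shift_op_adj s j d) (shift_op s l e) v w = shift_op_adj s j d v (shift_idx s j v)
      * shift_op s l e (shift_idx s j v) w"
    unfolding mmult_def by (rule infsum_single_nonzero) (auto simp: shift_op_adj_def)
  also have "\<dots> = shift_op s (l - j) (\<lambda>w. d (shift_idx s (l - j) w) * e w) v w"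
  proof -
    have ul: "shift_idx s l w = shift_idx s j (shift_idx s (l - j) w)" using jl
      by (simp add: shift_idx_add)
    have "(shift_idx s j v = shift_idx s l w) \<longleftrightarrow> v = shift_idx s (l - j) w" unfolding ul
      using shift_idx_inj[OF s] by blast
    then show ?thesis using shift_idx_Vset[OF s] by (auto simp: shift_op_def shift_op_adj_def)
  qed
  finally show "mmult (shift_op_adj s j d) (shift_op s l e) v w
      = shift_op s (l - j) (\<lambda>w. d (shift_idx s (l - j) w) * e w) v w" .
qed

lemma shift_op_adj_mult_shift_op_greater:
  assumes s: "s > 0" and jl: "l < j"
  shows "mmult (shift_op_adj s j d) (shift_op s l e)
      = shift_op_adj s (j - l) (\<lambda>v. d v * e (shift_idx s (j - l) v))"
proof (intro ext)
  fix v w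
  have "mmult (shift_op_adj s j d) (shift_op s l e) v w = shift_op_adj s j d v (shift_idx s j v)
      * shift_op s l e (shift_idx s j v) w"
    unfolding mmult_def by (rule infsum_single_nonzero) (auto simp: shift_op_adj_def)
  also have "\<dots> = shift_op_adj s (j - l) (\<lambda>v. d v * e (shift_idx s (j - l) v)) v w"
  proof -
    have uj: "shift_idx s j v = shift_idx s l (shift_idx s (j - l) v)" using jl
      by (simp add: shift_idx_add)
    have "(shift_idx s j v = shift_idx s l w) \<longleftrightarrow> w = shift_idx s (j - l) v" unfolding uj
      using shift_idx_inj[OF s] by blast
    then show ?thesis using shift_idx_Vset[OF s] by (auto simp: shift_op_def shift_op_adj_def)
  qed
  finally show "mmult (shift_op_adj s j d) (shift_op s l e) v w
      = shift_op_adj s (j - l) (\<lambda>v. d v * e (shift_idx s (j - l) v)) v w" .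
qed

lemma madj_shift_op: "madj (shift_op s k d) = shift_op_adj s k (\<lambda>v. cnj (d v))"
  by (auto simp: fun_eq_iff madj_def shift_op_def shift_op_adj_def)

lemma madj_shift_op_adj: "madj (shift_op_adj s k d) = shift_op s k (\<lambda>v. cnj (d v))"
  by (auto simp: fun_eq_iff madj_def shift_op_def shift_op_adj_def)

lemma mscale_shift_op: "mscale c (shift_op s k d) = shift_op s k (\<lambda>v. c * d v)"
  by (auto simp: fun_eq_iff mscale_def shift_op_def)

lemma mscale_shift_op_adj: "mscale c (shift_op_adj s k d) = shift_op_adj s k (\<lambda>v. c * d v)"
  by (auto simp: fun_eq_iff mscale_def shift_op_adj_def)

lemma mexpect_shift_op: "mexpect (shift_op s k d) = (if k = 0 then shift_op s 0 d else mzero)"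
  by (auto simp: fun_eq_iff mexpect_def shift_op_def mzero_def shift_idx_def)

lemma mexpect_shift_op_adj:
  "mexpect (shift_op_adj s k d) = (if k = 0 then shift_op s 0 d else mzero)"
  by (auto simp: fun_eq_iff mexpect_def shift_op_def shift_op_adj_def mzero_def shift_idx_def)

lemma mexpect_madd: "mexpect (madd A B) = madd (mexpect A) (mexpect B)"
  by (auto simp: fun_eq_iff mexpect_def madd_def)

lemma shift_op_0_in_TV_image:
  assumes s: "s > 0" and d: "d \<in> TV_diags s" shows "shift_op s 0 d \<in> TV s ` CXV s"
proof -
  obtain F where F: "F \<in> CXV s" and dF: "\<forall>v\<in>Vset s. d v = tv_diag s F v" using d
    unfolding TV_diags_def by blast
  have "shift_op s 0 d = TV s F" using dF by (auto simp: fun_eq_iff shift_op_def TV_eq[OF s])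
  then show ?thesis using F by blast
qed

lemma shift_op_bop:
  assumes s: "s > 0" and d: "d \<in> TV_diags s" shows "shift_op s k d \<in> bop s"
proof -
  obtain B where B: "B \<ge> 0" "\<forall>v\<in>Vset s. cmod (d v) \<le> B" using TV_diags_bounded[OF d] by blast
  have mb: "mbound (shift_op s k d) B"
  proof (rule mbound_monomial[where \<pi>="unshift_idx s k"])
    show "cmod (shift_op s k d v w) \<le> B" for v w using B by (auto simp: shift_op_def)
  qed (use B s in \<open>auto simp: shift_op_def split: if_splits\<close>)
  show ?thesis by (rule bopI[OF mb]) (use shift_idx_Vset[OF s] in \<open>auto simp: shift_op_def\<close>)
qed

lemma shift_op_adj_bop:
  assumes s: "s > 0" and d: "d \<in> TV_diags s" shows "shift_op_adj s k d \<in> bop s"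
proof -
  have "madj (shift_op s k (\<lambda>v. cnj (d v))) \<in> bop s" using shift_op_bop[OF s TV_diags_cnj[OF d]]
    by (rule bop_adj)
  then show ?thesis by (simp add: madj_shift_op)
qed

text \<open>Products of the operators \<open>shift_op\<close> and \<open>shift_op_adj\<close> are again of this form, so their
  finite sums form a \<open>*\<close>-algebra.\<close>

inductive_set shift_polys :: "nat \<Rightarrow> mat set" for s where
  op: "d \<in> TV_diags s \<Longrightarrow> shift_op s k d \<in> shift_polys s"
| op_adj: "d \<in> TV_diags s \<Longrightarrow> shift_op_adj s k d \<in> shift_polys s"
| add: "A \<in> shift_polys s \<Longrightarrow> B \<in> shift_polys s \<Longrightarrow> madd A B \<in> shift_polys s"

lemma shift_polys_bop:
  assumes s: "s > 0" shows "A \<in> shift_polys s \<Longrightarrow> A \<in> bop s"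
  by (induction A rule: shift_polys.induct)
    (auto intro: shift_op_bop[OF s] shift_op_adj_bop[OF s] bop_add)

lemma shift_polys_madj: "A \<in> shift_polys s \<Longrightarrow> madj A \<in> shift_polys s"
proof (induction A rule: shift_polys.induct)
  case (op d k) then show ?case by (simp add: madj_shift_op TV_diags_cnj shift_polys.op_adj)
next
  case (op_adj d k) then show ?case by (simp add: madj_shift_op_adj TV_diags_cnj shift_polys.op)
next
  case (add A B)
  have "madj (madd A B) = madd (madj A) (madj B)" by (simp add: fun_eq_iff madj_def madd_def)
  then show ?case using add by (simp add: shift_polys.add)
qed

lemma shift_polys_mscale: "A \<in> shift_polys s \<Longrightarrow> mscale c A \<in> shift_polys s"
proof (induction A rule: shift_polys.induct)
  case (op d k) then show ?case by (simp add: mscale_shift_op TV_diags_scale shift_polys.op)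
next
  case (op_adj d k) then show ?case
    by (simp add: mscale_shift_op_adj TV_diags_scale shift_polys.op_adj)
next
  case (add A B)
  have "mscale c (madd A B) = madd (mscale c A) (mscale c B)"
    by (simp add: fun_eq_iff mscale_def madd_def distrib_left)
  then show ?case using add by (simp add: shift_polys.add)
qed

definition shift_monomial :: "nat \<Rightarrow> mat \<Rightarrow> bool" where
  "shift_monomial s X \<longleftrightarrow> (\<exists>k d. d \<in> TV_diags s \<and> (X = shift_op s k d \<or> X = shift_op_adj s k d))"

lemma shift_monomial_in_shift_polys: "shift_monomial s X \<Longrightarrow> X \<in> shift_polys s"
  unfolding shift_monomial_def by (auto intro: shift_polys.op shift_polys.op_adj)

lemma shift_monomial_mmult:
  assumes s: "s > 0" and X: "shift_monomial s X" and Y: "shift_monomial s Y"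
    shows "shift_monomial s (mmult X Y)"
proof -
  obtain j d where d: "d \<in> TV_diags s" and Xf: "X = shift_op s j d \<or> X = shift_op_adj s j d" using X
    unfolding shift_monomial_def by blast
  obtain l e where e: "e \<in> TV_diags s" and Yf: "Y = shift_op s l e \<or> Y = shift_op_adj s l e" using Y
    unfolding shift_monomial_def by blast
  have de: "(\<lambda>u. d u * e u) \<in> TV_diags s" by (rule TV_diags_mult[OF d e])
  have c1: "(\<lambda>w. d (shift_idx s m w) * e w) \<in> TV_diags s" for m
    by (rule TV_diags_mult[OF TV_diags_shift_idx[OF s d] e])
  have c2: "(\<lambda>v. d v * e (shift_idx s m v)) \<in> TV_diags s" for m
    by (rule TV_diags_mult[OF d TV_diags_shift_idx[OF s e]])
  have c3: "pushforward s m (\<lambda>u. d u * e u) \<in> TV_diags s" for m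
    by (rule TV_diags_pushforward[OF s de])
  from Xf Yf consider (op_op) "X = shift_op s j d" "Y = shift_op s l e"
    | (op_adj) "X = shift_op s j d" "Y = shift_op_adj s l e"
    | (adj_adj) "X = shift_op_adj s j d" "Y = shift_op_adj s l e"
    | (adj_op) "X = shift_op_adj s j d" "Y = shift_op s l e"
    by blast
  then show ?thesis
  proof cases
    case op_op then show ?thesis
      using shift_op_mult_shift_op[OF s] c1 unfolding shift_monomial_def by metis
  next
    case op_adj then show ?thesis
      using shift_op_mult_shift_op_adj_ge[OF s, of l j] shift_op_mult_shift_op_adj_less[OF s, of j l] c3
      unfolding shift_monomial_def by (cases "l \<le> j") (metis, metis not_le)
  next
    case adj_adj then show ?thesis
      using shift_op_adj_mult_shift_op_adj[OF s] c2 unfolding shift_monomial_def by metis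
  next
    case adj_op then show ?thesis
      using shift_op_adj_mult_shift_op_le[OF s, of j l] shift_op_adj_mult_shift_op_greater[OF s, of l j]
        c1 c2
      unfolding shift_monomial_def by (cases "j \<le> l") (metis, metis not_le)
  qed
qed

lemma shift_monomial_bop: "s > 0 \<Longrightarrow> shift_monomial s X \<Longrightarrow> X \<in> bop s"
  using shift_polys_bop shift_monomial_in_shift_polys by blast

lemma shift_polys_mmult_monomial:
  assumes s: "s > 0" shows "A \<in> shift_polys s \<Longrightarrow> shift_monomial s Y \<Longrightarrow> mmult A Y \<in> shift_polys s"
proof (induction A rule: shift_polys.induct)
  case (op d k)
  then have "shift_monomial s (shift_op s k d)" unfolding shift_monomial_def by blast
  then show ?case using shift_monomial_mmult[OF s _ op(2)] shift_monomial_in_shift_polys by blast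
next
  case (op_adj d k)
  then have "shift_monomial s (shift_op_adj s k d)" unfolding shift_monomial_def by blast
  then show ?case using shift_monomial_mmult[OF s _ op_adj(2)] shift_monomial_in_shift_polys
    by blast
next
  case (add A B)
  then show ?case
    using mmult_madd_left[OF shift_polys_bop[OF s add(1)] shift_polys_bop[OF s add(2)]
        shift_monomial_bop[OF s add(5)]]
    by (simp add: shift_polys.add)
qed

lemma shift_polys_mmult:
  assumes s: "s > 0" and A: "A \<in> shift_polys s"
    shows "B \<in> shift_polys s \<Longrightarrow> mmult A B \<in> shift_polys s"
proof (induction B rule: shift_polys.induct)
  case (op d k)
  then have "shift_monomial s (shift_op s k d)" unfolding shift_monomial_def by blast
  then show ?case using shift_polys_mmult_monomial[OF s A] by blast
next
  case (op_adj d k)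
  then have "shift_monomial s (shift_op_adj s k d)" unfolding shift_monomial_def by blast
  then show ?case using shift_polys_mmult_monomial[OF s A] by blast
next
  case (add B1 B2)
  then show ?case
    using mmult_madd_right[OF shift_polys_bop[OF s A] shift_polys_bop[OF s add(1)]
        shift_polys_bop[OF s add(2)]]
    by (simp add: shift_polys.add)
qed

lemma mexpect_shift_polys:
  assumes s: "s > 0" shows "A \<in> shift_polys s \<Longrightarrow> mexpect A \<in> TV s ` CXV s"
proof (induction A rule: shift_polys.induct)
  case (op d k)
  have z: "mzero \<in> TV s ` CXV s" using TV_zero[OF s] CXV_zero by (metis image_eqI)
  show ?case using shift_op_0_in_TV_image[OF s op] z by (simp add: mexpect_shift_op)
next
  case (op_adj d k)
  have z: "mzero \<in> TV s ` CXV s" using TV_zero[OF s] CXV_zero by (metis image_eqI)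
  show ?case using shift_op_0_in_TV_image[OF s op_adj] z by (simp add: mexpect_shift_op_adj)
next
  case (add A B)
  then obtain F G where "F \<in> CXV s" "mexpect A = TV s F" "G \<in> CXV s" "mexpect B = TV s G" by blast
  then show ?case using TV_pair_add[OF s] CXV_pair_add by (metis image_eqI mexpect_madd)
qed

section \<open>Approximation of \<open>A\<^sub>V\<close> by polynomials in weighted shifts\<close>

definition norm_closure :: "nat \<Rightarrow> mat set \<Rightarrow> mat set" where
  "norm_closure s P = {T \<in> bop s. \<exists>X. (\<forall>k. X k \<in> P) \<and> (\<lambda>k. opnorm (mdiff (X k) T)) \<longlonglongrightarrow> 0}"

lemma norm_closure_subset_bop: "norm_closure s P \<subseteq> bop s"
  unfolding norm_closure_def by blast

lemma subset_norm_closure: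
  assumes "P \<subseteq> bop s" shows "P \<subseteq> norm_closure s P"
proof
  fix A assume "A \<in> P"
  have "mdiff A A = mzero" by (simp add: fun_eq_iff mdiff_def mzero_def)
  then show "A \<in> norm_closure s P"
    using \<open>A \<in> P\<close> assms opnorm_zero unfolding norm_closure_def by (auto intro!: exI[of _ "\<lambda>k. A"])
qed

lemma tendsto_0_if_le:
  fixes a :: "nat \<Rightarrow> real"
  shows "(\<And>k. 0 \<le> a k) \<Longrightarrow> (\<And>k. a k \<le> b k) \<Longrightarrow> b \<longlonglongrightarrow> 0 \<Longrightarrow> a \<longlonglongrightarrow> 0"
  by (rule tendsto_sandwich[of "\<lambda>_. 0" a sequentially b]) auto

lemma norm_closure_map:
  assumes P: "P \<subseteq> bop s" and fP: "\<And>X. X \<in> P \<Longrightarrow> f X \<in> P" and f: "\<And>T. T \<in> bop s \<Longrightarrow> f T \<in> bop s"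
    and lip: "\<And>X T. X \<in> bop s \<Longrightarrow> T \<in> bop s \<Longrightarrow> opnorm (mdiff (f X) (f T)) \<le> c * opnorm (mdiff X T)"
    and T: "T \<in> norm_closure s P"
  shows "f T \<in> norm_closure s P"
proof -
  obtain X where X: "\<And>k. X k \<in> P" "(\<lambda>k. opnorm (mdiff (X k) T)) \<longlonglongrightarrow> 0" and Tb: "T \<in> bop s"
    using T unfolding norm_closure_def by blast
  have Xb: "X k \<in> bop s" for k using X(1) P by blast
  have "(\<lambda>k. opnorm (mdiff (f (X k)) (f T))) \<longlonglongrightarrow> 0"
  proof (rule tendsto_0_if_le)
    show "0 \<le> opnorm (mdiff (f (X k)) (f T))" for k
      by (intro opnorm_nonneg_bop[of _ s] bop_diff f Xb Tb)
    show "opnorm (mdiff (f (X k)) (f T)) \<le> c * opnorm (mdiff (X k) T)" for k by (rule lip[OF Xb Tb])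
    show "(\<lambda>k. c * opnorm (mdiff (X k) T)) \<longlonglongrightarrow> 0" using tendsto_mult_right_zero[OF X(2)] by simp
  qed
  then show ?thesis unfolding norm_closure_def
    using X(1) fP f[OF Tb] by (auto intro!: exI[of _ "\<lambda>k. f (X k)"])
qed

lemma norm_closure_madd:
  assumes P: "P \<subseteq> bop s" and add: "\<And>X Y. X \<in> P \<Longrightarrow> Y \<in> P \<Longrightarrow> madd X Y \<in> P"
    and S: "S \<in> norm_closure s P" and T: "T \<in> norm_closure s P"
  shows "madd S T \<in> norm_closure s P"
proof -
  obtain X where X: "\<And>k. X k \<in> P" "(\<lambda>k. opnorm (mdiff (X k) S)) \<longlonglongrightarrow> 0" and Sb: "S \<in> bop s"
    using S unfolding norm_closure_def by blast
  obtain Y where Y: "\<And>k. Y k \<in> P" "(\<lambda>k. opnorm (mdiff (Y k) T)) \<longlonglongrightarrow> 0" and Tb: "T \<in> bop s"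
    using T unfolding norm_closure_def by blast
  have Xb: "X k \<in> bop s" and Yb: "Y k \<in> bop s" for k using X(1) Y(1) P by blast+
  have "(\<lambda>k. opnorm (mdiff (madd (X k) (Y k)) (madd S T))) \<longlonglongrightarrow> 0"
  proof (rule tendsto_0_if_le)
    have "mdiff (madd (X k) (Y k)) (madd S T) = madd (mdiff (X k) S) (mdiff (Y k) T)" for k
      by (simp add: fun_eq_iff mdiff_def madd_def)
    then show "opnorm (mdiff (madd (X k) (Y k)) (madd S T))
        \<le> opnorm (mdiff (X k) S) + opnorm (mdiff (Y k) T)" for k
      by (simp add: opnorm_add_le[of _ s] bop_diff Xb Yb Sb Tb)
    show "0 \<le> opnorm (mdiff (madd (X k) (Y k)) (madd S T))" for k
      by (intro opnorm_nonneg_bop[of _ s] bop_diff bop_add Xb Yb Sb Tb)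
    show "(\<lambda>k. opnorm (mdiff (X k) S) + opnorm (mdiff (Y k) T)) \<longlonglongrightarrow> 0"
      using tendsto_add[OF X(2) Y(2)] by simp
  qed
  then show ?thesis unfolding norm_closure_def
    using X(1) Y(1) add bop_add[OF Sb Tb] by (auto intro!: exI[of _ "\<lambda>k. madd (X k) (Y k)"])
qed

text \<open>\<open>X\<^sub>kY\<^sub>k - ST = (X\<^sub>k - S)Y\<^sub>k + S(Y\<^sub>k - T)\<close>, and \<open>\<parallel>Y\<^sub>k\<parallel>\<close> stays bounded.\<close>

lemma norm_closure_mmult:
  assumes P: "P \<subseteq> bop s" and mult: "\<And>X Y. X \<in> P \<Longrightarrow> Y \<in> P \<Longrightarrow> mmult X Y \<in> P"
    and S: "S \<in> norm_closure s P" and T: "T \<in> norm_closure s P"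
  shows "mmult S T \<in> norm_closure s P"
proof -
  obtain X where X: "\<And>k. X k \<in> P" and a0: "(\<lambda>k. opnorm (mdiff (X k) S)) \<longlonglongrightarrow> 0" and Sb: "S \<in> bop s"
    using S unfolding norm_closure_def by blast
  obtain Y where Y: "\<And>k. Y k \<in> P" and c0: "(\<lambda>k. opnorm (mdiff (Y k) T)) \<longlonglongrightarrow> 0" and Tb: "T \<in> bop s"
    using T unfolding norm_closure_def by blast
  have Xb: "X k \<in> bop s" and Yb: "Y k \<in> bop s" for k using X Y P by blast+
  define a where "a k = opnorm (mdiff (X k) S)" for k
  define c where "c k = opnorm (mdiff (Y k) T)" for k
  have "(\<lambda>k. opnorm (mdiff (mmult (X k) (Y k)) (mmult S T))) \<longlonglongrightarrow> 0"
  proof (rule tendsto_0_if_le)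
    show "0 \<le> opnorm (mdiff (mmult (X k) (Y k)) (mmult S T))" for k
      by (intro opnorm_nonneg_bop[of _ s] bop_diff bop_mult Xb Yb Sb Tb)
    show "opnorm (mdiff (mmult (X k) (Y k)) (mmult S T)) \<le> a k * (c k + opnorm T) + opnorm S * c k"
      for k
    proof -
      have "opnorm (Y k) = opnorm (madd (mdiff (Y k) T) T)" by (simp add: mdiff_def madd_def)
      then have Yk: "opnorm (Y k) \<le> c k + opnorm T"
        unfolding c_def using opnorm_add_le[OF bop_diff[OF Yb Tb] Tb] by simp
      have "opnorm (mdiff (mmult (X k) (Y k)) (mmult S T))
          \<le> opnorm (mmult (mdiff (X k) S) (Y k)) + opnorm (mmult S (mdiff (Y k) T))"
        unfolding mdiff_mmult_split[OF Xb Sb Yb Tb]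
          by (intro opnorm_add_le[of _ s] bop_mult bop_diff Xb Yb Sb Tb)
      also have "\<dots> \<le> a k * opnorm (Y k) + opnorm S * c k"
        unfolding a_def c_def by (intro add_mono opnorm_mult_le[of _ s] bop_diff Xb Yb Sb Tb)
      also have "\<dots> \<le> a k * (c k + opnorm T) + opnorm S * c k"
        using Yk opnorm_nonneg_bop[OF bop_diff[OF Xb Sb]] unfolding a_def
          by (simp add: mult_left_mono)
      finally show ?thesis .
    qed
    show "(\<lambda>k. a k * (c k + opnorm T) + opnorm S * c k) \<longlonglongrightarrow> 0"
      using a0 c0 unfolding a_def[symmetric] c_def[symmetric]
      by (auto intro!: tendsto_eq_intros)
  qed
  then show ?thesis unfolding norm_closure_def
    using X Y mult bop_mult[OF Sb Tb] by (auto intro!: exI[of _ "\<lambda>k. mmult (X k) (Y k)"])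
qed

lemma norm_closure_limit:
  assumes P: "P \<subseteq> bop s" and X: "\<And>k. X k \<in> norm_closure s P" and T: "T \<in> bop s"
    and lim: "(\<lambda>k. opnorm (mdiff (X k) T)) \<longlonglongrightarrow> 0"
  shows "T \<in> norm_closure s P"
proof -
  have Xb: "X k \<in> bop s" for k using X norm_closure_subset_bop by blast
  have "\<exists>Z. Z \<in> P \<and> opnorm (mdiff Z (X k)) < inverse (real (Suc k))" for k
  proof -
    obtain Y where Y: "\<And>m. Y m \<in> P" "(\<lambda>m. opnorm (mdiff (Y m) (X k))) \<longlonglongrightarrow> 0"
      using X[of k] unfolding norm_closure_def by blast
    then obtain m where "opnorm (mdiff (Y m) (X k)) < inverse (real (Suc k))"
      using order_tendstoD(2)[OF Y(2), of "inverse (real (Suc k))"]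
        by (auto simp: eventually_sequentially)
    then show ?thesis using Y(1) by blast
  qed
  then obtain Z where "\<forall>k. Z k \<in> P \<and> opnorm (mdiff (Z k) (X k)) < inverse (real (Suc k))"
    using choice[of "\<lambda>k Z. Z \<in> P \<and> opnorm (mdiff Z (X k)) < inverse (real (Suc k))"] by blast
  then have Z: "\<And>k. Z k \<in> P" "\<And>k. opnorm (mdiff (Z k) (X k)) < inverse (real (Suc k))" by auto
  have Zb: "Z k \<in> bop s" for k using Z(1) P by blast
  have "(\<lambda>k. opnorm (mdiff (Z k) T)) \<longlonglongrightarrow> 0"
  proof (rule tendsto_0_if_le)
    show "0 \<le> opnorm (mdiff (Z k) T)" for k by (intro opnorm_nonneg_bop[of _ s] bop_diff Zb T)
    show "opnorm (mdiff (Z k) T) \<le> inverse (real (Suc k)) + opnorm (mdiff (X k) T)" for k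
      using opnorm_diff_triangle[OF Zb Xb T, of k k] Z(2)[of k] by linarith
    show "(\<lambda>k. inverse (real (Suc k)) + opnorm (mdiff (X k) T)) \<longlonglongrightarrow> 0"
      using tendsto_add[OF LIMSEQ_inverse_real_of_nat lim] by simp
  qed
  then show ?thesis unfolding norm_closure_def using Z(1) T by (auto intro!: exI[of _ Z])
qed

lemma cstar_closed_norm_closure:
  assumes P: "P \<subseteq> bop s" and "mzero \<in> P"
    and add: "\<And>X Y. X \<in> P \<Longrightarrow> Y \<in> P \<Longrightarrow> madd X Y \<in> P"
    and mult: "\<And>X Y. X \<in> P \<Longrightarrow> Y \<in> P \<Longrightarrow> mmult X Y \<in> P"
    and scale: "\<And>c X. X \<in> P \<Longrightarrow> mscale c X \<in> P"
    and adj: "\<And>X. X \<in> P \<Longrightarrow> madj X \<in> P"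
  shows "cstar_closed s (norm_closure s P)"
  unfolding cstar_closed_def
proof (intro conjI ballI allI impI)
  show "norm_closure s P \<subseteq> bop s" by (rule norm_closure_subset_bop)
  show "mzero \<in> norm_closure s P" using subset_norm_closure[OF P] \<open>mzero \<in> P\<close> by blast
  show "madd S T \<in> norm_closure s P" "mmult S T \<in> norm_closure s P"
    if "S \<in> norm_closure s P" "T \<in> norm_closure s P" for S T
    using norm_closure_madd[OF P add that] norm_closure_mmult[OF P mult that] by blast+
  show "mscale c T \<in> norm_closure s P" if "T \<in> norm_closure s P" for c T
  proof (rule norm_closure_map[OF P scale bop_scale _ that])
    show "opnorm (mdiff (mscale c X) (mscale c T)) \<le> cmod c * opnorm (mdiff X T)"
      if "X \<in> bop s" "T \<in> bop s" for X T
    proof -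
      have "mdiff (mscale c X) (mscale c T) = mscale c (mdiff X T)"
        by (simp add: fun_eq_iff mdiff_def mscale_def algebra_simps)
      then show ?thesis using opnorm_scale_le[OF bop_diff[OF that]] by simp
    qed
  qed
  show "madj T \<in> norm_closure s P" if "T \<in> norm_closure s P" for T
  proof (rule norm_closure_map[OF P adj bop_adj _ that, where c=1])
    show "opnorm (mdiff (madj X) (madj T)) \<le> 1 * opnorm (mdiff X T)"
      if "X \<in> bop s" "T \<in> bop s" for X T
    proof -
      have "mdiff (madj X) (madj T) = madj (mdiff X T)" by (simp add: fun_eq_iff mdiff_def madj_def)
      then show ?thesis using opnorm_adj_le[OF bop_diff[OF that]] by simp
    qed
  qed
  show "T \<in> norm_closure s P"
    if "\<forall>k. X k \<in> norm_closure s P" "T \<in> bop s" "(\<lambda>k. opnorm (mdiff (X k) T)) \<longlonglongrightarrow> 0" for X T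
    using norm_closure_limit[OF P] that by blast
qed

lemma mzero_in_shift_polys: "mzero \<in> shift_polys s"
proof -
  have "shift_op s 0 (\<lambda>v. 0) = mzero" by (simp add: fun_eq_iff shift_op_def mzero_def)
  then show ?thesis using shift_polys.op[OF TV_diags_zero, of s 0] by simp
qed

lemma Vshift_eq_shift_op: "Vshift s = shift_op s 1 (\<lambda>v. 1)"
  by (auto simp: fun_eq_iff Vshift_def shift_op_def shift_idx_def)

lemma Mop_eq_shift_op: "Mop s f = shift_op s 0 (\<lambda>v. f (sdigits s (snd v)))"
  by (auto simp: fun_eq_iff Mop_def shift_op_def)

lemma AV_subset_norm_closure:
  assumes s: "s > 0" shows "AV s \<subseteq> norm_closure s (shift_polys s)"
  unfolding AV_def
proof (rule cstar_gen_least[OF cstar_closed_norm_closure])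
  show P: "shift_polys s \<subseteq> bop s" using shift_polys_bop[OF s] by blast
  have "Vshift s \<in> shift_polys s"
    unfolding Vshift_eq_shift_op by (rule shift_polys.op[OF TV_diags_one[OF s]])
  moreover have "Mop s f \<in> shift_polys s" if "f \<in> CZs s" for f
    unfolding Mop_eq_shift_op by (rule shift_polys.op[OF TV_diags_Mop[OF that]])
  ultimately show "{Vshift s} \<union> Mop s ` CZs s \<subseteq> norm_closure s (shift_polys s)"
    using subset_norm_closure[OF P] by blast
qed (auto intro: mzero_in_shift_polys shift_polys.add shift_polys_mmult[OF s]
    shift_polys_mscale shift_polys_madj)

text \<open>A gauge-invariant element of the closure is the limit of the gauge-invariant parts of its
  approximants, which lie in the image of \<open>T\<^sub>V\<close>.\<close>

lemma gauge_invariant_in_BV: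
  assumes s: "s \<ge> 2" and a: "a \<in> norm_closure s (shift_polys s)" and E: "mexpect a = a"
  shows "a \<in> BV s"
proof -
  have s0: "s > 0" using s by simp
  obtain X where X: "\<And>k. X k \<in> shift_polys s" "(\<lambda>k. opnorm (mdiff (X k) a)) \<longlonglongrightarrow> 0"
    and ab: "a \<in> bop s"
    using a unfolding norm_closure_def by blast
  have Xb: "X k \<in> bop s" for k using X shift_polys_bop[OF s0] by auto
  have "(\<lambda>k. opnorm (mdiff (mexpect (X k)) a)) \<longlonglongrightarrow> 0"
  proof (rule tendsto_0_if_le[OF _ _ X(2)])
    have "mdiff (mexpect (X k)) (mexpect a) = mexpect (mdiff (X k) a)" for k
      by (simp add: fun_eq_iff mexpect_def mdiff_def)
    then have "mdiff (mexpect (X k)) a = mexpect (mdiff (X k) a)" for k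
      using E by simp
    then show "opnorm (mdiff (mexpect (X k)) a) \<le> opnorm (mdiff (X k) a)" for k
      by (simp add: opnorm_mexpect_le[of _ s] bop_diff Xb ab)
    show "0 \<le> opnorm (mdiff (mexpect (X k)) a)" for k
      by (intro opnorm_nonneg_bop[of _ s] bop_diff bop_mexpect Xb ab)
  qed
  then have "a \<in> TV s ` CXV s"
    by (rule cstar_closed_limit[OF TV_image_cstar_closed[OF s] mexpect_shift_polys[OF s0 X(1)] ab])
  then show ?thesis using BV_eq_TV_image[OF s] by simp
qed

section \<open>The gauge action\<close>

definition phase :: "real \<Rightarrow> nat \<Rightarrow> complex" where
  "phase \<theta> n = exp (2 * pi * \<i> * of_nat n * of_real \<theta>)"

lemma rho_eq:
  assumes a: "a \<in> bop s"
  shows "rho s \<theta> a v w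
    = (if v \<in> Vset s \<and> w \<in> Vset s then phase \<theta> (fst v) * a v w * phase (-\<theta>) (fst w) else 0)"
proof -
  have left: "mmult (Ugauge s \<theta>) a v u = (if v \<in> Vset s then phase \<theta> (fst v) * a v u else 0)" for u
  proof -
    have "mmult (Ugauge s \<theta>) a v u = Ugauge s \<theta> v v * a v u"
      unfolding mmult_def by (rule infsum_single_nonzero) (simp add: Ugauge_def)
    then show ?thesis by (simp add: Ugauge_def phase_def)
  qed
  have "rho s \<theta> a v w = mmult (Ugauge s \<theta>) a v w * Ugauge s (-\<theta>) w w"
    unfolding rho_def mmult_def[of _ "Ugauge s (-\<theta>)"]
    by (rule infsum_single_nonzero) (simp add: Ugauge_def)
  then show ?thesis
    unfolding left using bop_column_outside[OF a, of w v] by (auto simp: Ugauge_def phase_def)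
qed

lemma phase_mult_phase_minus:
  "phase \<theta> n * phase (-\<theta>) m = exp (2 * pi * \<i> * of_real ((real n - real m) * \<theta>))"
  unfolding phase_def exp_add[symmetric] by (simp add: algebra_simps)

lemma rho_TV: "s > 0 \<Longrightarrow> F \<in> CXV s \<Longrightarrow> rho s \<theta> (TV s F) = TV s F"
  by (auto simp: fun_eq_iff rho_eq TV_bop TV_eq phase_mult_phase_minus)

text \<open>Off the level-diagonal, the angle \<open>\<theta> = 1 / (2 (n - m))\<close> turns an entry into its negative.\<close>

lemma mexpect_eq_if_gauge_invariant:
  assumes a: "a \<in> bop s" and fixed: "\<forall>\<theta>. rho s \<theta> a = a"
  shows "mexpect a = a"
proof (intro ext)
  fix v w
  show "mexpect a v w = a v w"
  proof (cases "fst v = fst w \<or> v \<notin> Vset s \<or> w \<notin> Vset s")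
    case True then show ?thesis
      using a by (auto simp: mexpect_def bop_row_outside bop_column_outside)
  next
    case False
    define \<theta> where "\<theta> = 1 / (2 * (real (fst v) - real (fst w)))"
    have half: "(real (fst v) - real (fst w)) * \<theta> = 1 / 2" using False by (simp add: \<theta>_def)
    have "phase \<theta> (fst v) * phase (-\<theta>) (fst w) = exp (\<i> * of_real pi)"
      unfolding phase_mult_phase_minus half by simp
    then have "phase \<theta> (fst v) * phase (-\<theta>) (fst w) = -1" by simp
    have "a v w = rho s \<theta> a v w" using fixed by simp
    also have "\<dots> = phase \<theta> (fst v) * phase (-\<theta>) (fst w) * a v w"
      using False by (simp add: rho_eq[OF a] mult_ac)
    also have "\<dots> = - a v w" using \<open>phase \<theta> (fst v) * phase (-\<theta>) (fst w) = -1\<close> by simp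
    finally have "a v w = - a v w" .
    then show ?thesis using False by (simp add: mexpect_def)
  qed
qed

section \<open>The projections \<open>P\<^sub>(\<^sub>n\<^sub>,\<^sub>0\<^sub>)\<close> lie in \<open>A\<^sub>V\<close>\<close>

lemma Pn_eq_shift_op: "s > 0 \<Longrightarrow> Pn s n = shift_op s 0 (\<lambda>v. if v = (n, 0) then 1 else 0)"
  using Vset_level_zero[of s n] by (auto simp: fun_eq_iff Pn_def shift_op_def)

lemma first_digit_zero_CZs: "(\<lambda>a::nat\<Rightarrow>nat. if a \<in> Zs s \<and> a 0 = 0 then 1 else (0::complex)) \<in> CZs s"
proof -
  have "continuous_on (Zs s) (\<lambda>a::nat\<Rightarrow>nat. if a 0 = 0 then 1 else (0::complex))"
    using continuous_on_digit_comp[of "Zs s" "\<lambda>n. if n = 0 then 1 else (0::complex)" 0] by simp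
  then have "continuous_on (Zs s) (\<lambda>a::nat\<Rightarrow>nat. if a \<in> Zs s \<and> a 0 = 0 then 1 else (0::complex))"
    by (rule continuous_on_cong[THEN iffD1, OF refl, rotated]) auto
  then show ?thesis by (simp add: CZs_def)
qed

text \<open>\<open>V V\<^sup>*\<close> is the projection onto the span of the \<open>E\<^sub>(\<^sub>n\<^sub>,\<^sub>x\<^sub>)\<close> with \<open>s\<close> dividing \<open>x\<close> and \<open>n \<ge> 1\<close>,
  so \<open>P\<^sub>(\<^sub>0\<^sub>,\<^sub>0\<^sub>) = M\<^sub>\<chi> - V V\<^sup>*\<close> with \<open>\<chi>\<close> the indicator of \<open>s \<int>\<^sub>s\<close>.\<close>

lemma Pn_0_eq:
  assumes s: "s > 0"
  shows "Pn s 0 = mdiff (Mop s (\<lambda>a. if a \<in> Zs s \<and> a 0 = 0 then 1 else 0))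
    (mmult (Vshift s) (madj (Vshift s)))"
proof -
  have VV: "mmult (Vshift s) (madj (Vshift s)) = shift_op s 0 (pushforward s 1 (\<lambda>u. 1))"
    unfolding Vshift_eq_shift_op madj_shift_op
    using shift_op_mult_shift_op_adj_ge[OF s, of 1 1 "\<lambda>v. 1" "\<lambda>v. cnj 1"] by simp
  show ?thesis unfolding VV
  proof (intro ext)
    fix v w :: "nat \<times> nat"
    show "Pn s 0 v w = mdiff (Mop s (\<lambda>a. if a \<in> Zs s \<and> a 0 = 0 then 1 else 0))
        (shift_op s 0 (pushforward s 1 (\<lambda>u. 1))) v w"
    proof (cases "v = w \<and> v \<in> Vset s")
      case True
      have "sdigits s (snd v) 0 = 0 \<longleftrightarrow> s dvd snd v"
        using power_dvd_iff_sdigits[OF s, of 1 "snd v"] by simp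
      moreover have "snd v = 0" if "fst v = 0" using True that by (auto simp: Vset_iff)
      ultimately show ?thesis using True sdigits_in_Zs[OF s, of "snd v"] Vset_level_zero[OF s]
        by (cases v) (auto simp: Pn_def mdiff_def Mop_def shift_op_def pushforward_def)
    next
      case False
      then show ?thesis
        by (auto simp: Pn_def mdiff_def Mop_def shift_op_def pushforward_def Vset_level_zero[OF s])
    qed
  qed
qed

lemma Pn_Suc_eq:
  assumes s: "s > 0" shows "Pn s (Suc n) = mmult (mmult (Vshift s) (Pn s n)) (madj (Vshift s))"
proof -
  define \<delta> where "\<delta> m = (\<lambda>v::nat\<times>nat. if v = (m, 0) then 1 else (0::complex))" for m
  have "mmult (Vshift s) (Pn s n) = shift_op s 1 (\<lambda>w. 1 * \<delta> n w)"
    unfolding Vshift_eq_shift_op Pn_eq_shift_op[OF s] \<delta>_def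
    using shift_op_mult_shift_op[OF s, of 1 "\<lambda>v. 1" 0] by simp
  then have "mmult (mmult (Vshift s) (Pn s n)) (madj (Vshift s))
      = shift_op s 0 (pushforward s 1 (\<lambda>u. (1 * \<delta> n u) * cnj 1))"
    unfolding Vshift_eq_shift_op madj_shift_op using shift_op_mult_shift_op_adj_ge[OF s, of 1 1]
      by simp
  also have "pushforward s 1 (\<lambda>u. (1 * \<delta> n u) * cnj 1) = \<delta> (Suc n)"
    by (auto simp: fun_eq_iff pushforward_def \<delta>_def unshift_idx_def dvd_div_eq_0_iff)
  finally show ?thesis unfolding Pn_eq_shift_op[OF s] \<delta>_def ..
qed

lemma Pn_in_cstar_closed:
  assumes s: "s > 0" and A: "cstar_closed s A" and V: "Vshift s \<in> A" and M: "Mop s ` CZs s \<subseteq> A"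
  shows "Pn s n \<in> A"
proof (induction n)
  case 0
  have "mdiff (Mop s (\<lambda>a. if a \<in> Zs s \<and> a 0
      = 0 then 1 else 0)) (mmult (Vshift s) (madj (Vshift s))) \<in> A"
    unfolding mdiff_eq_madd_mscale using M first_digit_zero_CZs
    by (intro cstar_closed_add[OF A] cstar_closed_scale[OF A] cstar_closed_mult[OF A]
        cstar_closed_adj[OF A] V) auto
  then show ?case unfolding Pn_0_eq[OF s] .
next
  case (Suc n)
  then show ?case unfolding Pn_Suc_eq[OF s]
    by (intro cstar_closed_mult[OF A] cstar_closed_adj[OF A] V)
qed

lemma BV_subset_AV:
  assumes s: "s > 0" shows "BV s \<subseteq> AV s"
proof
  fix b assume b: "b \<in> BV s"
  show "b \<in> AV s" unfolding AV_def
  proof (rule cstar_genI)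
    fix A assume A: "cstar_closed s A" and G: "{Vshift s} \<union> Mop s ` CZs s \<subseteq> A"
    then have "Mop s ` CZs s \<union> range (Pn s) \<subseteq> A" using Pn_in_cstar_closed[OF s A] by blast
    then show "b \<in> A" using cstar_gen_least[OF A] b unfolding BV_def by blast
  qed
qed

lemma BV_eq_AVinv:
  assumes s: "s \<ge> 2" shows "BV s = AVinv s"
proof
  have s0: "s > 0" using s by simp
  show "BV s \<subseteq> AVinv s"
    unfolding AVinv_def using BV_subset_AV[OF s0] BV_eq_TV_image[OF s] rho_TV[OF s0] by auto
  show "AVinv s \<subseteq> BV s"
  proof
    fix a assume "a \<in> AVinv s"
    then have a: "a \<in> norm_closure s (shift_polys s)" and fixed: "\<forall>\<theta>. rho s \<theta> a = a"
      using AV_subset_norm_closure[OF s0] unfolding AVinv_def by auto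
    then have "mexpect a = a"
      using mexpect_eq_if_gauge_invariant norm_closure_subset_bop by blast
    then show "a \<in> BV s" by (rule gauge_invariant_in_BV[OF s a])
  qed
qed

theorem proposition5p3:
  fixes s :: nat
  assumes "s \<ge> 2"
  shows "(\<forall>F\<in>CXV s. (\<lambda>N. opnorm (mdiff (TV s F)
            (madd (\<lambda>v w. \<Sum>n<N. mscale (snd F n - fst F (sdigits s 0)) (Pn s n) v w)
                  (Mop s (fst F))))) \<longlonglongrightarrow> 0)
    \<and> bij_betw (TV s) (CXV s) (BV s)
    \<and> (\<forall>F\<in>CXV s. \<forall>G\<in>CXV s.
          TV s (\<lambda>a. fst F a + fst G a, \<lambda>n. snd F n + snd G n) = madd (TV s F) (TV s G)
        \<and> TV s (\<lambda>a. fst F a * fst G a, \<lambda>n. snd F n * snd G n) = mmult (TV s F) (TV s G))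
    \<and> (\<forall>F\<in>CXV s. \<forall>c. TV s (\<lambda>a. c * fst F a, \<lambda>n. c * snd F n) = mscale c (TV s F))
    \<and> (\<forall>F\<in>CXV s. TV s (\<lambda>a. cnj (fst F a), \<lambda>n. cnj (snd F n)) = madj (TV s F))
    \<and> BV s = AVinv s"
proof -
  have s0: "s > 0" using assms by simp
  have "bij_betw (TV s) (CXV s) (BV s)"
    unfolding bij_betw_def using TV_inj_on[OF assms] BV_eq_TV_image[OF assms] by simp
  then show ?thesis
    using TV_partial_tendsto[OF s0] TV_pair_add[OF s0] TV_pair_mult[OF s0]
      TV_pair_scale[OF s0] TV_pair_cnj[OF s0] BV_eq_AVinv[OF assms]
    unfolding TV_partial_def pair_add_def pair_mult_def pair_scale_def pair_cnj_def
    by blast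
qed

end
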